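(* Let $N=3$ and let $a,b,\alpha,\beta\in\{1,\dots,8\}$ be four distinct indices such that, up to a phase, $U_a=U_b^\dagger$ and $U_\alpha=U_\beta^\dagger$. For $t_a,t_b,t_\alpha,t_\beta\ge0$ let $\Lambda=\exp(t_a\mathcal{L}_a+t_b\mathcal{L}_b+t_\alpha\mathcal{L}_\alpha+t_\beta\mathcal{L}_\beta)=\sum_{\mu=0}^8p_\mu U_\mu\otimes\overline{U}_\mu$. Then $\Lambda$ lies in the boundary of $\mathcal{A}_3^Q$, and its probability vector has product structure: there is a bijection $\sigma:\{0,\dots,8\}\to\{1,2,3\}^2$ such that $p_\mu=f_i(t_a,t_b)\,f_j(t_\alpha,t_\beta)$ whenever $\sigma(\mu)=(i,j)$, where, writing $E=e^{-\frac32(x+y)}$, $c=\cos[\frac{\sqrt3}2(x-y)]$, $s=\sin[\frac{\sqrt3}2(x-y)]$, $$f_1(x,y)=\tfrac13(1+2Ec),\quad f_2(x,y)=\tfrac13(1-Ec+\sqrt3Es),\quad f_3(x,y)=\tfrac13(1-Ec-\sqrt3Es).$$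
   Context: $\omega=e^{2\pi i/3}$, $X|j\rangle=|j\oplus1\rangle$ (addition mod 3), $Z=\mathrm{diag}(1,\omega,\omega^2)$, Weyl unitaries $U_{kl}=X^kZ^l$ indexed by $\mu=3k+l\in\{0,\dots,8\}$. Superoperators act on $|A\rangle\rangle=\sum A_{ij}|i\rangle|j\rangle$ ($\rho\mapsto K\rho K^\dagger$ corresponds to $K\otimes\overline K$). $\mathcal{L}_\mu=U_\mu\otimes\overline{U}_\mu-\mathbb{I}_9$, and $\mathcal{A}_3^Q$ is the set of $\exp(\sum_{\mu=1}^8t_\mu\mathcal{L}_\mu)$ with all $t_\mu\ge0$, viewed as a subset of the 8-simplex of Weyl channels $\sum_\mu p_\mu U_\mu\otimes\overline U_\mu$; boundary refers to this set within that simplex. *)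

theory Defs
  imports "HOL-Analysis.Analysis"
begin

text \<open>Square complex matrices are represented as functions nat => nat => complex;
  only the entries with indices below the relevant dimension matter.\<close>

type_synonym cmat = "nat \<Rightarrow> nat \<Rightarrow> complex"

definition mmul :: "nat \<Rightarrow> cmat \<Rightarrow> cmat \<Rightarrow> cmat" where
  "mmul n A B = (\<lambda>i j. \<Sum>k<n. A i k * B k j)"

definition midt :: cmat where
  "midt = (\<lambda>i j. if i = j then 1 else 0)"

fun mpow :: "nat \<Rightarrow> cmat \<Rightarrow> nat \<Rightarrow> cmat" where
  "mpow n A 0 = midt"
| "mpow n A (Suc m) = mmul n (mpow n A m) A"

definition mexp :: "nat \<Rightarrow> cmat \<Rightarrow> cmat" where
  "mexp n A = (\<lambda>i j. \<Sum>m. mpow n A m i j / of_nat (fact m))"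

definition meq :: "nat \<Rightarrow> cmat \<Rightarrow> cmat \<Rightarrow> bool" where
  "meq n A B = (\<forall>i<n. \<forall>j<n. A i j = B i j)"

definition adj :: "cmat \<Rightarrow> cmat" where
  "adj A = (\<lambda>i j. cnj (A j i))"

definition omega :: complex where
  "omega = cis (2 * pi / 3)"

definition Xop :: cmat where
  "Xop = (\<lambda>i j. if i = (j + 1) mod 3 then 1 else 0)"

definition Zop :: cmat where
  "Zop = (\<lambda>i j. if i = j then omega ^ i else 0)"

definition Weyl :: "nat \<Rightarrow> cmat" where
  "Weyl \<mu> = mmul 3 (mpow 3 Xop (\<mu> div 3)) (mpow 3 Zop (\<mu> mod 3))"

text \<open>Superoperator K \<otimes> conj K acting on |A>> = sum A_ij |i>|j>, basis index 3i+j.\<close>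
definition superop :: "cmat \<Rightarrow> cmat" where
  "superop K = (\<lambda>r c. K (r div 3) (c div 3) * cnj (K (r mod 3) (c mod 3)))"

definition Lgen :: "nat \<Rightarrow> cmat" where
  "Lgen \<mu> = (\<lambda>r c. superop (Weyl \<mu>) r c - midt r c)"

definition weyl_channel :: "(nat \<Rightarrow> real) \<Rightarrow> cmat" where
  "weyl_channel p = (\<lambda>r c. \<Sum>\<mu><9. complex_of_real (p \<mu>) * superop (Weyl \<mu>) r c)"

definition weyl_simplex :: "(nat \<Rightarrow> real) set" where
  "weyl_simplex = {p. (\<forall>\<mu>. 0 \<le> p \<mu>) \<and> (\<forall>\<mu>\<ge>9. p \<mu> = 0) \<and> (\<Sum>\<mu><9. p \<mu>) = 1}"

definition gen_comb :: "(nat \<Rightarrow> real) \<Rightarrow> cmat" where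
  "gen_comb t = (\<lambda>r c. \<Sum>\<mu>\<in>{1..8}. complex_of_real (t \<mu>) * Lgen \<mu> r c)"

definition AQ3 :: "(nat \<Rightarrow> real) set" where
  "AQ3 = {p \<in> weyl_simplex. \<exists>t::nat \<Rightarrow> real. (\<forall>\<mu>\<in>{1..8}. 0 \<le> t \<mu>)
            \<and> meq 9 (weyl_channel p) (mexp 9 (gen_comb t))}"

definition AQ3_boundary :: "(nat \<Rightarrow> real) set" where
  "AQ3_boundary = (top_of_set weyl_simplex) frontier_of AQ3"

definition fprob :: "nat \<Rightarrow> real \<Rightarrow> real \<Rightarrow> real" where
  "fprob i x y =
     (let E = exp (-(3/2) * (x + y));
          c = cos (sqrt 3 / 2 * (x - y));
          s = sin (sqrt 3 / 2 * (x - y))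
      in if i = 1 then (1 + 2 * E * c) / 3
         else if i = 2 then (1 - E * c + sqrt 3 * E * s) / 3
         else (1 - E * c - sqrt 3 * E * s) / 3)"

end

theory Submission
  imports Defs
begin

text \<open>All Weyl-channel superoperators are diagonal in the basis of vectorised Weyl unitaries
  \<open>|U\<^sub>\<nu>\<rangle>\<rangle>\<close>: the channel \<open>p\<close> has eigenvalues \<open>\<lambda>\<^sub>\<nu> = \<Sum>\<^sub>\<mu> p\<^sub>\<mu> \<chi>(\<mu>,\<nu>)\<close> and the generator
  \<open>\<Sum> t\<^sub>\<mu> \<L>\<^sub>\<mu>\<close> has eigenvalues \<open>l\<^sub>\<nu> = \<Sum> t\<^sub>\<mu> (\<chi>(\<mu>,\<nu>) - 1)\<close>, where \<open>\<chi>(\<mu>,\<nu>) = \<omega>\<^bsup>\<langle>\<mu>,\<nu>\<rangle>\<^esup>\<close>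
  comes from the symplectic form on \<open>\<int>\<^sub>3\<^sup>2\<close>. As \<open>U\<^sub>b \<sim> U\<^sub>a\<^sup>\<dagger>\<close> and \<open>U\<^sub>\<beta> \<sim> U\<^sub>\<alpha>\<^sup>\<dagger>\<close>, the
  characters of \<open>b, \<beta>\<close> are the conjugates of those of \<open>a, \<alpha>\<close>, and \<open>a, \<alpha>\<close> is a basis of
  \<open>\<int>\<^sub>3\<^sup>2\<close>. For \<open>\<mu> = i a + j \<alpha>\<close> we get \<open>\<chi>(\<mu>,\<nu>) = X\<^sup>i Y\<^sup>j\<close> with \<open>X = \<chi>(a,\<nu>)\<close>,
  \<open>Y = \<chi>(\<alpha>,\<nu>)\<close>, so the product vector \<open>p\<^sub>\<mu> = f\<^sub>i\<^sub>+\<^sub>1(t\<^sub>a,t\<^sub>b) f\<^sub>j\<^sub>+\<^sub>1(t\<^sub>\<alpha>,t\<^sub>\<beta>)\<close> has the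
  eigenvalues of the exponential by the generating function identity
  \<open>\<Sum>\<^sub>i f\<^sub>i\<^sub>+\<^sub>1(x,y) w\<^sup>i = exp (x (w - 1) + y (w\<^sup>2 - 1))\<close> for \<open>w\<^sup>3 = 1\<close>.

  Every point of \<open>\<A>\<^sub>3\<^sup>Q\<close> satisfies \<open>\<Prod>\<^sub>\<nu> |\<lambda>\<^sub>\<nu>| \<le> |\<lambda>\<^sub>\<nu>\<^sub>'|\<^sup>6\<close>, since the left side is
  \<open>exp (-9 \<Sum> t)\<close> and \<open>Re \<chi> \<ge> -1/2\<close>. For our channel this is an equality at any \<open>\<nu>\<^sub>0\<close> with
  \<open>X, Y \<noteq> 1\<close>, and an arbitrarily small move inside the simplex breaks the inequality, so the
  channel lies on the boundary.\<close>

section \<open>Cube roots of unity\<close>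

lemma cube_root_power_mod:
  fixes w :: "'a::monoid_mult"
  assumes "w ^ 3 = 1"
  shows "w ^ n = w ^ (n mod 3)"
proof -
  have "w ^ n = w ^ (3 * (n div 3) + n mod 3)" by (metis div_mult_mod_eq mult.commute)
  also have "\<dots> = w ^ (n mod 3)" by (simp only: power_add power_mult assms) simp
  finally show ?thesis .
qed

lemma Complex_power2 [simp]: "(Complex a b) ^ 2 = Complex (a * a - b * b) (2 * a * b)"
  by (simp add: power2_eq_square complex_eq_iff)

lemma omega_eq: "omega = Complex (-1/2) (sqrt 3 / 2)"
  by (simp add: omega_def cis.ctr cos_120 sin_120)

lemma omega_sq: "omega ^ 2 = Complex (-1/2) (- sqrt 3 / 2)"
  by (simp add: omega_eq power2_eq_square complex_eq_iff)

lemma omega_cube: "omega ^ 3 = 1"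
proof -
  have "omega ^ 3 = omega ^ 2 * omega" by (simp add: power3_eq_cube power2_eq_square)
  also have "\<dots> = 1" by (simp only: omega_sq omega_eq) (simp add: complex_eq_iff)
  finally show ?thesis .
qed

lemmas omega_power_mod = cube_root_power_mod[OF omega_cube]

lemma omega_power_cong: "x mod 3 = y mod 3 \<Longrightarrow> omega ^ x = omega ^ y"
  by (metis omega_power_mod)

lemma cnj_omega_power: "cnj (omega ^ n) = omega ^ (2 * n)"
proof -
  have "cnj omega = omega ^ 2" by (simp add: omega_eq power2_eq_square complex_eq_iff)
  then show ?thesis by (simp add: power_mult)
qed

lemma less_3_cases: "(x::nat) < 3 \<Longrightarrow> x = 0 \<or> x = 1 \<or> x = 2"
  by linarith

lemma omega_power_eq_1_iff: "omega ^ n = 1 \<longleftrightarrow> n mod 3 = 0"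
proof -
  have "omega \<noteq> 1" "omega ^ 2 \<noteq> 1" by (simp_all add: omega_eq omega_sq complex_eq_iff)
  then show ?thesis using less_3_cases[of "n mod 3"]
    by (metis omega_power_mod mod_less_divisor zero_less_numeral power_0 power_one_right)
qed

lemma omega_power_inj: "x < 3 \<Longrightarrow> y < 3 \<Longrightarrow> omega ^ x = omega ^ y \<Longrightarrow> x = y"
  using less_3_cases[of x] less_3_cases[of y]
  by (auto simp: omega_eq omega_sq complex_eq_iff)

lemma sum_lessThan_3: "(\<Sum>a<3. f a) = f 0 + f 1 + f (2::nat)"
  by (simp add: eval_nat_numeral lessThan_Suc add_ac)

lemma sum_omega_powers: "(\<Sum>l<3. omega ^ (l * m)) = (if m mod 3 = 0 then 3 else 0)"
proof -
  have "(\<Sum>l<3. omega ^ (l * m)) = 1 + omega ^ (m mod 3) + omega ^ ((2 * (m mod 3)) mod 3)"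
    unfolding sum_lessThan_3 by (metis mult_1 mult_0 power_0 omega_power_mod mod_mult_right_eq)
  moreover have "1 + omega + omega ^ 2 = 0"
    by (simp only: omega_sq omega_eq) (simp add: complex_eq_iff)
  ultimately show ?thesis using less_3_cases[of "m mod 3"] omega_cube
    by (auto simp: power2_eq_square algebra_simps)
qed

lemma Re_omega_power: "Re (omega ^ n) = (if n mod 3 = 0 then 1 else -1/2)"
proof -
  have "Re (omega ^ m) = (if m = 0 then 1 else -1/2)" if "m < 3" for m
    using less_3_cases[OF that] by (auto simp: omega_eq omega_sq)
  then show ?thesis by (subst omega_power_mod) simp
qed

lemma norm_omega_power: "cmod (omega ^ n) = 1"
  by (simp add: omega_def norm_power)

section \<open>Weyl operators and the eigenbasis of Weyl channels\<close>

lemma sum_lessThan_9: "(\<Sum>c<9. f c) = (\<Sum>a<3. \<Sum>b<3. f (3 * a + b::nat))"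
proof -
  have "(\<Sum>c<9. f c) = (\<Sum>a<3. sum f {a * 3..<a * 3 + 3})" using sum.nat_group[of f 3 3] by simp
  also have "\<dots> = (\<Sum>a<3. \<Sum>b<3. f (3 * a + b))"
  proof (rule sum.cong)
    fix a assume "a \<in> {..<(3::nat)}"
    have "sum f {0 + a * 3..<3 + a * 3} = (\<Sum>b=0..<3. f (b + a * 3))" by (rule sum.shift_bounds_nat_ivl)
    then show "sum f {a * 3..<a * 3 + 3} = (\<Sum>b<3. f (3 * a + b))"
      by (simp add: atLeast0LessThan add.commute mult.commute)
  qed simp
  finally show ?thesis .
qed

lemma nat_eq_iff_div_mod_3: "(x::nat) = y \<longleftrightarrow> x div 3 = y div 3 \<and> x mod 3 = y mod 3"
  by (metis div_mult_mod_eq)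

lemma sum_if_shift_mod_3:
  fixes i k :: nat
  assumes "i < 3" "k < 3"
  shows "(\<Sum>a<3. if i = (a + k) mod 3 then g a else 0) = g ((i + 2 * k) mod 3)"
  using less_3_cases[OF assms(1)] less_3_cases[OF assms(2)]
  by (elim disjE; simp add: sum_lessThan_3; simp add: numeral_2_eq_2)

lemma mpow_Xop: "i < 3 \<Longrightarrow> j < 3 \<Longrightarrow> mpow 3 Xop k i j = (if i = (j + k) mod 3 then 1 else 0)"
proof (induction k arbitrary: i j)
  case 0 then show ?case by (simp add: midt_def)
next
  case (Suc k)
  have "mpow 3 Xop (Suc k) i j = (\<Sum>m<3. if i = (m + k mod 3) mod 3 then Xop m j else 0)"
    using Suc by (auto simp: mmul_def mod_add_right_eq intro: sum.cong)
  also have "\<dots> = Xop ((i + 2 * (k mod 3)) mod 3) j"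
    by (rule sum_if_shift_mod_3) (use Suc in auto)
  also have "\<dots> = (if i = (j + Suc k) mod 3 then 1 else 0)"
  proof -
    have "(j + Suc k) mod 3 = (j + 1 + k mod 3) mod 3" using mod_add_right_eq[of "j + 1" k 3] by simp
    moreover have "((i + 2 * x) mod 3 = (j + 1) mod 3) = (i = (j + 1 + x) mod 3)" if "x < 3" for x
      using less_3_cases[OF Suc.prems(1)] less_3_cases[OF Suc.prems(2)] less_3_cases[OF that]
      by (elim disjE; simp)
    ultimately show ?thesis unfolding Xop_def by simp
  qed
  finally show ?case .
qed

lemma mpow_Zop: "i < 3 \<Longrightarrow> j < 3 \<Longrightarrow> mpow 3 Zop l i j = (if i = j then omega ^ (i * l) else 0)"
proof (induction l arbitrary: i j)
  case 0 then show ?case by (simp add: midt_def)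
next
  case (Suc l)
  have "mpow 3 Zop (Suc l) i j = (\<Sum>m<3. (if i = m then omega ^ (i * l) else 0) * Zop m j)"
    using Suc by (simp add: mmul_def)
  also have "\<dots> = (\<Sum>m<3. if m = i then omega ^ (i * l) * Zop i j else 0)"
    by (rule sum.cong) auto
  also have "\<dots> = (if i = j then omega ^ (i * Suc l) else 0)"
    using Suc.prems by (simp add: Zop_def power_add mult.commute)
  finally show ?case .
qed

lemma Weyl_entry: "i < 3 \<Longrightarrow> j < 3 \<Longrightarrow>
  Weyl \<mu> i j = (if i = (j + \<mu> div 3) mod 3 then omega ^ (\<mu> mod 3 * j) else 0)"
  unfolding Weyl_def mmul_def
  by (simp add: mpow_Xop mpow_Zop if_distrib[of "\<lambda>x. x * _"] mult.commute cong: if_cong)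

lemma sum_Weyl_row:
  assumes "\<mu> < 9" "i < 3"
  shows "(\<Sum>a<3. Weyl \<mu> i a * f a) = omega ^ (\<mu> mod 3 * ((i + 2 * (\<mu> div 3)) mod 3)) * f ((i + 2 * (\<mu> div 3)) mod 3)"
proof -
  have "(\<Sum>a<3. Weyl \<mu> i a * f a) = (\<Sum>a<3. if i = (a + \<mu> div 3) mod 3 then omega ^ (\<mu> mod 3 * a) * f a else 0)"
    by (intro sum.cong refl) (simp add: Weyl_entry assms)
  also have "\<dots> = omega ^ (\<mu> mod 3 * ((i + 2 * (\<mu> div 3)) mod 3)) * f ((i + 2 * (\<mu> div 3)) mod 3)"
    by (rule sum_if_shift_mod_3) (use assms in auto)
  finally show ?thesis .
qed

lemma sum_cnj_Weyl_row:
  assumes "\<mu> < 9" "i < 3"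
  shows "(\<Sum>a<3. cnj (Weyl \<mu> i a) * f a)
    = cnj (omega ^ (\<mu> mod 3 * ((i + 2 * (\<mu> div 3)) mod 3))) * f ((i + 2 * (\<mu> div 3)) mod 3)"
proof -
  have "(\<Sum>a<3. cnj (Weyl \<mu> i a) * f a) = cnj (\<Sum>a<3. Weyl \<mu> i a * cnj (f a))" by simp
  then show ?thesis by (simp add: sum_Weyl_row assms)
qed

text \<open>Writing \<open>\<mu> = 3k + l\<close> for \<open>(k, l) \<in> \<int>\<^sub>3\<^sup>2\<close>, \<open>sympl\<close> is the symplectic form
  \<open>l k' - k l'\<close> (with \<open>2\<close> standing for \<open>-1\<close>), and \<open>zneg\<close> is negation in \<open>\<int>\<^sub>3\<^sup>2\<close>.\<close>

definition sympl :: "nat \<Rightarrow> nat \<Rightarrow> nat" where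
  "sympl \<mu> \<nu> = (\<mu> mod 3 * (\<nu> div 3) + 2 * (\<mu> div 3) * (\<nu> mod 3)) mod 3"

definition weyl_char :: "nat \<Rightarrow> nat \<Rightarrow> complex" where
  "weyl_char \<mu> \<nu> = omega ^ sympl \<mu> \<nu>"

definition zneg :: "nat \<Rightarrow> nat" where
  "zneg \<nu> = 3 * (2 * (\<nu> div 3) mod 3) + 2 * (\<nu> mod 3) mod 3"

definition mvec :: "nat \<Rightarrow> cmat \<Rightarrow> (nat \<Rightarrow> complex) \<Rightarrow> nat \<Rightarrow> complex" where
  "mvec n A v = (\<lambda>i. \<Sum>j<n. A i j * v j)"

definition weyl_vec :: "nat \<Rightarrow> nat \<Rightarrow> complex" where
  "weyl_vec \<nu> c = Weyl \<nu> (c div 3) (c mod 3)"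

lemma Weyl_conj_index_arith:
  fixes i j k k' :: nat
  assumes "i < 3" "j < 3" "k < 3" "k' < 3"
  shows "(i + 2 * k) mod 3 = ((j + 2 * k) mod 3 + k') mod 3 \<longleftrightarrow> i = (j + k') mod 3"
  using less_3_cases[OF assms(1)] less_3_cases[OF assms(2)] less_3_cases[OF assms(3)]
    less_3_cases[OF assms(4)]
  by (elim disjE; simp)

lemma Weyl_conj_phase_arith:
  fixes j k l k' l' :: nat
  assumes "j < 3" "k < 3" "l < 3" "k' < 3" "l' < 3"
  shows "(l * (((j + k') mod 3 + 2 * k) mod 3) + (2 * (l * ((j + 2 * k) mod 3)) + l' * ((j + 2 * k) mod 3))) mod 3
       = ((l * k' + 2 * k * l') mod 3 + l' * j) mod 3"
  using less_3_cases[OF assms(1)] less_3_cases[OF assms(2)] less_3_cases[OF assms(3)]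
    less_3_cases[OF assms(4)] less_3_cases[OF assms(5)]
  by (elim disjE; simp)

lemma Weyl_conjugation:
  assumes "\<mu> < 9" "\<nu> < 9" "i < 3" "j < 3"
  shows "(\<Sum>a<3. Weyl \<mu> i a * (\<Sum>b<3. cnj (Weyl \<mu> j b) * Weyl \<nu> a b)) = weyl_char \<mu> \<nu> * Weyl \<nu> i j"
proof -
  define k l k' l' where "k = \<mu> div 3" and "l = \<mu> mod 3" and "k' = \<nu> div 3" and "l' = \<nu> mod 3"
  have lt: "i < 3" "j < 3" "k < 3" "l < 3" "k' < 3" "l' < 3"
    using assms unfolding k_def l_def k'_def l'_def by auto
  define a0 b0 where "a0 = (i + 2 * k) mod 3" and "b0 = (j + 2 * k) mod 3"
  have "(\<Sum>a<3. Weyl \<mu> i a * (\<Sum>b<3. cnj (Weyl \<mu> j b) * Weyl \<nu> a b))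
      = omega ^ (l * a0) * (cnj (omega ^ (l * b0)) * Weyl \<nu> a0 b0)"
    unfolding a0_def b0_def k_def l_def
    by (simp add: sum_Weyl_row sum_cnj_Weyl_row assms del: complex_cnj_power)
  also have "\<dots> = weyl_char \<mu> \<nu> * Weyl \<nu> i j"
  proof -
    have Wa0: "Weyl \<nu> a0 b0 = (if a0 = (b0 + k') mod 3 then omega ^ (l' * b0) else 0)"
      unfolding k'_def l'_def a0_def b0_def by (rule Weyl_entry) simp_all
    have Wij: "Weyl \<nu> i j = (if i = (j + k') mod 3 then omega ^ (l' * j) else 0)"
      unfolding k'_def l'_def by (rule Weyl_entry[OF assms(3,4)])
    have chi: "weyl_char \<mu> \<nu> = omega ^ ((l * k' + 2 * k * l') mod 3)"
      unfolding weyl_char_def sympl_def k_def l_def k'_def l'_def ..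
    have idx: "a0 = (b0 + k') mod 3 \<longleftrightarrow> i = (j + k') mod 3"
      unfolding a0_def b0_def by (rule Weyl_conj_index_arith[OF lt(1,2,3,5)])
    show ?thesis
    proof (cases "i = (j + k') mod 3")
      case True
      have "omega ^ (l * a0) * (cnj (omega ^ (l * b0)) * omega ^ (l' * b0))
          = omega ^ ((l * k' + 2 * k * l') mod 3 + l' * j)"
        unfolding cnj_omega_power power_add[symmetric] a0_def b0_def True
        by (rule omega_power_cong) (rule Weyl_conj_phase_arith[OF lt(2-6)])
      then show ?thesis using True idx unfolding Wa0 Wij chi by (simp add: power_add)
    next
      case False
      then show ?thesis using idx unfolding Wa0 Wij by simp
    qed
  qed
  finally show ?thesis .
qed

lemma superop_Weyl_eigen:
  assumes "\<mu> < 9" "\<nu> < 9" "r < 9"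
  shows "mvec 9 (superop (Weyl \<mu>)) (weyl_vec \<nu>) r = weyl_char \<mu> \<nu> * weyl_vec \<nu> r"
proof -
  have "mvec 9 (superop (Weyl \<mu>)) (weyl_vec \<nu>) r
      = (\<Sum>a<3. Weyl \<mu> (r div 3) a * (\<Sum>b<3. cnj (Weyl \<mu> (r mod 3) b) * Weyl \<nu> a b))"
    unfolding mvec_def sum_lessThan_9 superop_def weyl_vec_def
    by (intro sum.cong refl) (simp add: sum_distrib_left algebra_simps)
  then show ?thesis
    unfolding weyl_vec_def using assms Weyl_conjugation[OF assms(1,2), of "r div 3" "r mod 3"] by simp
qed

lemma weyl_vec_orthogonal_arith:
  fixes i1 i2 j1 j2 :: nat
  assumes "i1 < 3" "i2 < 3" "j1 < 3" "j2 < 3"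
  shows "(j1 = (j2 + (i1 + 2 * i2) mod 3) mod 3 \<and> (i2 + 2 * j2) mod 3 = 0) \<longleftrightarrow> i1 = j1 \<and> i2 = j2"
  using less_3_cases[OF assms(1)] less_3_cases[OF assms(2)] less_3_cases[OF assms(3)]
    less_3_cases[OF assms(4)]
  by (elim disjE; simp)

lemma weyl_vec_orthogonal:
  assumes "i < 9" "j < 9"
  shows "(\<Sum>\<nu><9. weyl_vec \<nu> i * cnj (weyl_vec \<nu> j)) = (if i = j then 3 else 0)"
proof -
  define i1 i2 j1 j2 where "i1 = i div 3" and "i2 = i mod 3" and "j1 = j div 3" and "j2 = j mod 3"
  have lt: "i1 < 3" "i2 < 3" "j1 < 3" "j2 < 3"
    using assms unfolding i1_def i2_def j1_def j2_def by auto
  have "(\<Sum>\<nu><9. weyl_vec \<nu> i * cnj (weyl_vec \<nu> j))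
     = (\<Sum>k<3. \<Sum>l<3. if i1 = (k + i2) mod 3 then
          (if j1 = (j2 + k) mod 3 then omega ^ (l * (i2 + 2 * j2)) else 0) else 0)"
    unfolding sum_lessThan_9
  proof (intro sum.cong refl)
    fix k l assume "k \<in> {..<3::nat}" "l \<in> {..<3::nat}"
    then have W: "weyl_vec (3 * k + l) x
        = (if x div 3 = (x mod 3 + k) mod 3 then omega ^ (l * (x mod 3)) else 0)" if "x < 9" for x
      unfolding weyl_vec_def using that by (simp add: Weyl_entry)
    have "omega ^ (l * i2) * cnj (omega ^ (l * j2)) = omega ^ (l * (i2 + 2 * j2))"
      by (simp only: cnj_omega_power power_add[symmetric]) (simp add: algebra_simps)
    then show "weyl_vec (3 * k + l) i * cnj (weyl_vec (3 * k + l) j) =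
      (if i1 = (k + i2) mod 3 then (if j1 = (j2 + k) mod 3 then omega ^ (l * (i2 + 2 * j2)) else 0) else 0)"
      unfolding W[OF assms(1)] W[OF assms(2)] i1_def[symmetric] i2_def[symmetric]
        j1_def[symmetric] j2_def[symmetric]
      by (simp add: add.commute)
  qed
  also have "\<dots> = (\<Sum>k<3. if i1 = (k + i2) mod 3 then
          (if j1 = (j2 + k) mod 3 then (if (i2 + 2 * j2) mod 3 = 0 then 3 else 0) else 0) else 0)"
    by (intro sum.cong refl) (simp add: sum_omega_powers)
  also have "\<dots> = (if j1 = (j2 + (i1 + 2 * i2) mod 3) mod 3 then
          (if (i2 + 2 * j2) mod 3 = 0 then 3 else 0) else 0)"
    by (rule sum_if_shift_mod_3) (use lt in auto)
  also have "\<dots> = (if i = j then 3 else 0)"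
  proof -
    have "i = j \<longleftrightarrow> i1 = j1 \<and> i2 = j2"
      unfolding i1_def i2_def j1_def j2_def by (rule nat_eq_iff_div_mod_3)
    then show ?thesis unfolding weyl_vec_orthogonal_arith[OF lt, symmetric] by simp
  qed
  finally show ?thesis .
qed

lemma less_9_cases: "(x::nat) < 9 \<Longrightarrow> x = 0 \<or> x = 1 \<or> x = 2 \<or> x = 3 \<or> x = 4 \<or> x = 5 \<or> x = 6 \<or> x = 7 \<or> x = 8"
  by linarith

lemma sympl_less_3: "sympl \<mu> \<nu> < 3"
  by (simp add: sympl_def)

lemma sympl_commute: "\<mu> < 9 \<Longrightarrow> \<nu> < 9 \<Longrightarrow> sympl \<mu> \<nu> = 2 * sympl \<nu> \<mu> mod 3"
  by (elim less_9_cases[elim_format] disjE) (simp_all add: sympl_def)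

lemma sympl_zneg_right: "\<mu> < 9 \<Longrightarrow> \<nu> < 9 \<Longrightarrow> sympl \<mu> (zneg \<nu>) = 2 * sympl \<mu> \<nu> mod 3"
  by (elim less_9_cases[elim_format] disjE) (simp_all add: sympl_def zneg_def)

lemma sympl_zneg_left: "\<mu> < 9 \<Longrightarrow> \<nu> < 9 \<Longrightarrow> sympl (zneg \<mu>) \<nu> = 2 * sympl \<mu> \<nu> mod 3"
  by (elim less_9_cases[elim_format] disjE) (simp_all add: sympl_def zneg_def)

lemma zneg_less_9: "zneg \<nu> < 9"
  by (simp add: zneg_def)

lemma zneg_neq: "\<nu> < 9 \<Longrightarrow> \<nu> \<noteq> 0 \<Longrightarrow> zneg \<nu> \<noteq> \<nu> \<and> zneg \<nu> \<noteq> 0"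
  by (elim less_9_cases[elim_format] disjE) (simp_all add: zneg_def)

lemma weyl_char_0_right [simp]: "weyl_char \<mu> 0 = 1"
  by (simp add: weyl_char_def sympl_def)

lemma weyl_char_eq: "weyl_char \<mu> \<nu> = omega ^ (\<mu> mod 3 * (\<nu> div 3) + 2 * (\<mu> div 3) * (\<nu> mod 3))"
  unfolding weyl_char_def sympl_def by (rule omega_power_mod[symmetric])

lemma cnj_weyl_char: "cnj (weyl_char \<mu> \<nu>) = weyl_char \<mu> \<nu> ^ 2"
  unfolding weyl_char_def cnj_omega_power power_mult[symmetric] by (simp add: mult.commute)

lemma weyl_char_cube: "weyl_char \<mu> \<nu> ^ 3 = 1"
  unfolding weyl_char_def by (metis omega_cube power_mult mult.commute power_one)

lemma norm_weyl_char: "cmod (weyl_char \<mu> \<nu>) = 1"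
  by (simp add: weyl_char_def norm_omega_power)

lemma weyl_char_eq_1_iff: "weyl_char \<mu> \<nu> = 1 \<longleftrightarrow> sympl \<mu> \<nu> = 0"
  by (simp add: weyl_char_def omega_power_eq_1_iff sympl_def)

lemma Re_weyl_char: "Re (weyl_char \<mu> \<nu>) = (if weyl_char \<mu> \<nu> = 1 then 1 else -1/2)"
  unfolding weyl_char_def Re_omega_power omega_power_eq_1_iff ..

lemma omega_power_double_mod: "omega ^ (2 * n mod 3) = cnj (omega ^ n)"
  unfolding cnj_omega_power by (rule omega_power_mod[symmetric])

lemma weyl_char_commute: "\<mu> < 9 \<Longrightarrow> \<nu> < 9 \<Longrightarrow> weyl_char \<mu> \<nu> = cnj (weyl_char \<nu> \<mu>)"
  unfolding weyl_char_def by (simp only: sympl_commute[of \<mu> \<nu>] omega_power_double_mod)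

lemma weyl_char_zneg_right: "\<mu> < 9 \<Longrightarrow> \<nu> < 9 \<Longrightarrow> weyl_char \<mu> (zneg \<nu>) = cnj (weyl_char \<mu> \<nu>)"
  unfolding weyl_char_def by (simp only: sympl_zneg_right omega_power_double_mod)

lemma weyl_char_zneg_left: "\<mu> < 9 \<Longrightarrow> \<nu> < 9 \<Longrightarrow> weyl_char (zneg \<mu>) \<nu> = cnj (weyl_char \<mu> \<nu>)"
  unfolding weyl_char_def by (simp only: sympl_zneg_left omega_power_double_mod)

lemma weyl_char_inj:
  assumes "\<mu> < 9" "\<mu>' < 9" "\<And>\<nu>. \<nu> < 9 \<Longrightarrow> weyl_char \<mu> \<nu> = weyl_char \<mu>' \<nu>"
  shows "\<mu> = \<mu>'"
proof -
  have "sympl \<mu> \<nu> = sympl \<mu>' \<nu>" if "\<nu> < 9" for \<nu>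
    using assms(3)[OF that] unfolding weyl_char_def by (rule omega_power_inj[OF sympl_less_3 sympl_less_3])
  from this[of 1] this[of 3] show ?thesis
    using less_9_cases[OF assms(1)] less_9_cases[OF assms(2)]
    by (elim disjE) (simp_all add: sympl_def)
qed

lemma sum_omega_bilinear:
  "(\<Sum>\<mu><9. omega ^ (\<mu> mod 3 * A + \<mu> div 3 * B)) = (if A mod 3 = 0 \<and> B mod 3 = 0 then 9 else 0)"
proof -
  have "(\<Sum>\<mu><9. omega ^ (\<mu> mod 3 * A + \<mu> div 3 * B)) = (\<Sum>k<3. \<Sum>l<3. omega ^ (l * A) * omega ^ (k * B))"
    unfolding sum_lessThan_9 by (intro sum.cong refl) (auto simp: power_add)
  also have "\<dots> = (\<Sum>l<3. omega ^ (l * A)) * (\<Sum>k<3. omega ^ (k * B))"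
    by (simp add: sum_product mult.commute sum_distrib_left)
  finally show ?thesis by (simp add: sum_omega_powers)
qed

lemma weyl_char_orthogonal:
  assumes "\<nu>1 < 9" "\<nu>2 < 9"
  shows "(\<Sum>\<mu><9. cnj (weyl_char \<mu> \<nu>1) * weyl_char \<mu> \<nu>2) = (if \<nu>1 = \<nu>2 then 9 else 0)"
proof -
  have "(\<Sum>\<mu><9. cnj (weyl_char \<mu> \<nu>1) * weyl_char \<mu> \<nu>2)
      = (\<Sum>\<mu><9. omega ^ (\<mu> mod 3 * (2 * (\<nu>1 div 3) + \<nu>2 div 3)
                            + \<mu> div 3 * (4 * (\<nu>1 mod 3) + 2 * (\<nu>2 mod 3))))"
    unfolding weyl_char_eq cnj_omega_power power_add[symmetric]
    by (intro sum.cong refl arg_cong[where f="\<lambda>n. omega ^ n"]) (simp add: algebra_simps)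
  moreover have "((2 * (\<nu>1 div 3) + \<nu>2 div 3) mod 3 = 0 \<and> (4 * (\<nu>1 mod 3) + 2 * (\<nu>2 mod 3)) mod 3 = 0)
      \<longleftrightarrow> \<nu>1 = \<nu>2"
    using less_9_cases[OF assms(1)] less_9_cases[OF assms(2)] by (elim disjE) simp_all
  ultimately show ?thesis by (simp add: sum_omega_bilinear)
qed

lemma weyl_char_orthogonal_zneg:
  assumes "\<nu>1 < 9" "\<nu>2 < 9"
  shows "(\<Sum>\<mu><9. weyl_char \<mu> \<nu>1 * weyl_char \<mu> \<nu>2) = (if \<nu>2 = zneg \<nu>1 then 9 else 0)"
proof -
  have "(\<Sum>\<mu><9. weyl_char \<mu> \<nu>1 * weyl_char \<mu> \<nu>2)
      = (\<Sum>\<mu><9. omega ^ (\<mu> mod 3 * (\<nu>1 div 3 + \<nu>2 div 3)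
                            + \<mu> div 3 * (2 * (\<nu>1 mod 3) + 2 * (\<nu>2 mod 3))))"
    unfolding weyl_char_eq power_add[symmetric]
    by (intro sum.cong refl arg_cong[where f="\<lambda>n. omega ^ n"]) (simp add: algebra_simps)
  moreover have "((\<nu>1 div 3 + \<nu>2 div 3) mod 3 = 0 \<and> (2 * (\<nu>1 mod 3) + 2 * (\<nu>2 mod 3)) mod 3 = 0)
      \<longleftrightarrow> \<nu>2 = zneg \<nu>1"
    using less_9_cases[OF assms(1)] less_9_cases[OF assms(2)] by (elim disjE) (simp_all add: zneg_def)
  ultimately show ?thesis by (simp add: sum_omega_bilinear)
qed

lemma sum_weyl_char_left: "\<nu> < 9 \<Longrightarrow> (\<Sum>\<mu><9. weyl_char \<mu> \<nu>) = (if \<nu> = 0 then 9 else 0)"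
  using weyl_char_orthogonal[of 0 \<nu>] by simp

lemma sum_weyl_char_right: "\<mu> < 9 \<Longrightarrow> (\<Sum>\<nu><9. weyl_char \<mu> \<nu>) = (if \<mu> = 0 then 9 else 0)"
proof -
  assume "\<mu> < 9"
  then have "(\<Sum>\<nu><9. weyl_char \<mu> \<nu>) = (\<Sum>\<nu><9. cnj (weyl_char \<nu> \<mu>))"
    by (intro sum.cong refl) (simp add: weyl_char_commute[of \<mu>])
  also have "\<dots> = cnj (\<Sum>\<nu><9. weyl_char \<nu> \<mu>)" by simp
  finally show ?thesis using sum_weyl_char_left[OF \<open>\<mu> < 9\<close>] by simp
qed

section \<open>Eigenvalues of Weyl channels and their generators\<close>

lemma mvec_midt: "i < n \<Longrightarrow> mvec n midt v i = v i"
  by (simp add: mvec_def midt_def if_distrib[of "\<lambda>x. x * _"] cong: if_cong)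

lemma mvec_add: "mvec n (\<lambda>r c. X r c + Y r c) v i = mvec n X v i + mvec n Y v i"
  by (simp add: mvec_def distrib_right sum.distrib)

lemma mvec_diff: "mvec n (\<lambda>r c. X r c - Y r c) v i = mvec n X v i - mvec n Y v i"
  by (simp add: mvec_def left_diff_distrib sum_subtractf)

lemma mvec_scale: "mvec n (\<lambda>r c. a * X r c) v i = a * mvec n X v i"
  by (simp add: mvec_def sum_distrib_left mult.assoc)

lemma mvec_sum: "mvec n (\<lambda>r c. \<Sum>\<mu>\<in>I. f \<mu> * B \<mu> r c) v i = (\<Sum>\<mu>\<in>I. f \<mu> * mvec n (B \<mu>) v i)"
proof -
  have "mvec n (\<lambda>r c. \<Sum>\<mu>\<in>I. f \<mu> * B \<mu> r c) v i = (\<Sum>j<n. \<Sum>\<mu>\<in>I. f \<mu> * (B \<mu> i j * v j))"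
    by (simp add: mvec_def sum_distrib_right mult.assoc)
  also have "\<dots> = (\<Sum>\<mu>\<in>I. f \<mu> * mvec n (B \<mu>) v i)"
    by (subst sum.swap) (simp add: mvec_def sum_distrib_left)
  finally show ?thesis .
qed

lemma mvec_meq: "meq n A B \<Longrightarrow> i < n \<Longrightarrow> mvec n A v i = mvec n B v i"
  unfolding meq_def mvec_def by (intro sum.cong refl) auto

lemma mvec_mpow_eigen:
  assumes "\<And>i. i < n \<Longrightarrow> mvec n A v i = c * v i" "i < n"
  shows "mvec n (mpow n A m) v i = c ^ m * v i"
  using assms(2)
proof (induction m arbitrary: i)
  case 0 then show ?case by (simp add: mvec_midt)
next
  case (Suc m)
  have "mvec n (mpow n A (Suc m)) v i = (\<Sum>j<n. \<Sum>k<n. mpow n A m i k * (A k j * v j))"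
    by (simp add: mvec_def mmul_def sum_distrib_right mult.assoc)
  also have "\<dots> = (\<Sum>k<n. mpow n A m i k * mvec n A v k)"
    by (subst sum.swap) (simp add: mvec_def sum_distrib_left)
  also have "\<dots> = (\<Sum>k<n. mpow n A m i k * (c * v k))"
    by (intro sum.cong refl) (simp add: assms(1))
  also have "\<dots> = c * mvec n (mpow n A m) v i"
    by (simp add: mvec_def sum_distrib_left algebra_simps)
  finally show ?case using Suc by simp
qed

lemma norm_mpow_le:
  assumes "\<And>i j. i < n \<Longrightarrow> j < n \<Longrightarrow> cmod (A i j) \<le> K" "0 \<le> K" "i < n" "j < n"
  shows "cmod (mpow n A m i j) \<le> (real n * K) ^ m"
  using assms(3,4)
proof (induction m arbitrary: i j)
  case 0 then show ?case by (simp add: midt_def)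
next
  case (Suc m)
  have "cmod (mpow n A (Suc m) i j) \<le> (\<Sum>k<n. cmod (mpow n A m i k * A k j))"
    unfolding mpow.simps mmul_def by (rule norm_sum)
  also have "\<dots> \<le> (\<Sum>k<n. (real n * K) ^ m * K)"
    unfolding norm_mult
    by (intro sum_mono mult_mono Suc.IH Suc.prems assms(1)) (auto simp: assms(2))
  finally show ?case by (simp add: mult_ac)
qed

lemma summable_mpow_fact:
  assumes "i < n" "j < n"
  shows "summable (\<lambda>m. mpow n A m i j / of_nat (fact m))"
proof -
  define K where "K = (\<Sum>i<n. \<Sum>j<n. cmod (A i j))"
  have K: "cmod (A i j) \<le> K" if "i < n" "j < n" for i j
  proof -
    have "cmod (A i j) \<le> (\<Sum>j<n. cmod (A i j))" using that by (intro member_le_sum) auto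
    also have "\<dots> \<le> K"
      unfolding K_def using that by (intro member_le_sum[where f="\<lambda>i. \<Sum>j<n. cmod (A i j)"]) (auto intro: sum_nonneg)
    finally show ?thesis .
  qed
  have "0 \<le> K" unfolding K_def by (intro sum_nonneg) auto
  show ?thesis
  proof (rule summable_comparison_test)
    show "\<exists>N. \<forall>m\<ge>N. norm (mpow n A m i j / of_nat (fact m)) \<le> (real n * K) ^ m / fact m"
      using norm_mpow_le[OF K \<open>0 \<le> K\<close> assms] by (auto simp: norm_divide divide_right_mono)
    show "summable (\<lambda>m. (real n * K) ^ m / fact m)"
      using summable_exp[of "real n * K"] by (simp add: divide_inverse mult.commute)
  qed
qed

lemma mvec_mexp_eigen:
  assumes "\<And>i. i < n \<Longrightarrow> mvec n A v i = c * v i" "i < n"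
  shows "mvec n (mexp n A) v i = exp c * v i"
proof -
  have "mvec n (mexp n A) v i = (\<Sum>j<n. \<Sum>m. mpow n A m i j / of_nat (fact m) * v j)"
    unfolding mvec_def mexp_def
  proof (intro sum.cong refl)
    fix j assume "j \<in> {..<n}"
    then show "(\<Sum>m. mpow n A m i j / of_nat (fact m)) * v j = (\<Sum>m. mpow n A m i j / of_nat (fact m) * v j)"
      by (intro suminf_mult2 summable_mpow_fact assms(2)) simp
  qed
  also have "\<dots> = (\<Sum>m. \<Sum>j<n. mpow n A m i j / of_nat (fact m) * v j)"
    by (rule suminf_sum[symmetric]) (intro summable_mult2 summable_mpow_fact assms, simp)
  also have "\<dots> = (\<Sum>m. c ^ m / of_nat (fact m) * v i)"
  proof (intro suminf_cong)
    fix m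
    have "(\<Sum>j<n. mpow n A m i j / of_nat (fact m) * v j) = mvec n (mpow n A m) v i / of_nat (fact m)"
      by (simp add: mvec_def sum_divide_distrib algebra_simps)
    then show "(\<Sum>j<n. mpow n A m i j / of_nat (fact m) * v j) = c ^ m / of_nat (fact m) * v i"
      using mvec_mpow_eigen[OF assms] by simp
  qed
  also have "\<dots> = exp c * v i"
  proof -
    have "(\<lambda>m. c ^ m / of_nat (fact m)) sums exp c"
      using exp_converges[of c] by (simp add: scaleR_conv_of_real divide_inverse mult.commute)
    then show ?thesis by (intro sums_unique[symmetric] sums_mult2)
  qed
  finally show ?thesis .
qed

definition chan_eigval :: "(nat \<Rightarrow> real) \<Rightarrow> nat \<Rightarrow> complex" where
  "chan_eigval p \<nu> = (\<Sum>\<mu><9. complex_of_real (p \<mu>) * weyl_char \<mu> \<nu>)"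

definition gen_eigval :: "(nat \<Rightarrow> real) \<Rightarrow> nat \<Rightarrow> complex" where
  "gen_eigval t \<nu> = (\<Sum>\<mu>\<in>{1..8}. complex_of_real (t \<mu>) * (weyl_char \<mu> \<nu> - 1))"

lemma chan_eigval_0: "p \<in> weyl_simplex \<Longrightarrow> chan_eigval p 0 = 1"
  unfolding chan_eigval_def weyl_simplex_def by (simp flip: of_real_sum)

lemma weyl_simplexI:
  assumes "\<And>\<mu>. 0 \<le> p \<mu>" "\<And>\<mu>. 9 \<le> \<mu> \<Longrightarrow> p \<mu> = 0" "chan_eigval p 0 = 1"
  shows "p \<in> weyl_simplex"
proof -
  have "complex_of_real (\<Sum>\<mu><9. p \<mu>) = 1"
    using assms(3) unfolding chan_eigval_def by simp
  then show ?thesis unfolding weyl_simplex_def using assms(1,2) of_real_eq_1_iff by blast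
qed

lemma mvec_weyl_channel:
  "\<nu> < 9 \<Longrightarrow> i < 9 \<Longrightarrow> mvec 9 (weyl_channel p) (weyl_vec \<nu>) i = chan_eigval p \<nu> * weyl_vec \<nu> i"
  unfolding weyl_channel_def mvec_sum chan_eigval_def sum_distrib_right
  by (intro sum.cong refl) (simp add: superop_Weyl_eigen mult.assoc)

lemma mvec_Lgen:
  "\<mu> < 9 \<Longrightarrow> \<nu> < 9 \<Longrightarrow> i < 9 \<Longrightarrow> mvec 9 (Lgen \<mu>) (weyl_vec \<nu>) i = (weyl_char \<mu> \<nu> - 1) * weyl_vec \<nu> i"
  unfolding Lgen_def mvec_diff by (simp add: superop_Weyl_eigen mvec_midt algebra_simps)

lemma mvec_gen_comb:
  "\<nu> < 9 \<Longrightarrow> i < 9 \<Longrightarrow> mvec 9 (gen_comb t) (weyl_vec \<nu>) i = gen_eigval t \<nu> * weyl_vec \<nu> i"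
  unfolding gen_comb_def mvec_sum gen_eigval_def sum_distrib_right
  by (intro sum.cong refl) (simp add: mvec_Lgen mult.assoc)

lemma weyl_vec_diagonal: "\<nu> < 9 \<Longrightarrow> weyl_vec \<nu> (3 * (\<nu> div 3)) = 1"
  unfolding weyl_vec_def by (simp add: Weyl_entry)

lemma chan_eigval_eq_exp:
  assumes "meq 9 (weyl_channel p) (mexp 9 (gen_comb t))" "\<nu> < 9"
  shows "chan_eigval p \<nu> = exp (gen_eigval t \<nu>)"
proof -
  define i where "i = 3 * (\<nu> div 3)"
  have i: "i < 9" using assms(2) unfolding i_def by simp
  have "chan_eigval p \<nu> * weyl_vec \<nu> i = mvec 9 (weyl_channel p) (weyl_vec \<nu>) i"
    using mvec_weyl_channel[OF assms(2) i] by simp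
  also have "\<dots> = mvec 9 (mexp 9 (gen_comb t)) (weyl_vec \<nu>) i" by (rule mvec_meq[OF assms(1) i])
  also have "\<dots> = exp (gen_eigval t \<nu>) * weyl_vec \<nu> i"
    by (rule mvec_mexp_eigen[OF mvec_gen_comb[OF assms(2)] i])
  finally show ?thesis using weyl_vec_diagonal[OF assms(2)] unfolding i_def by simp
qed

lemma meq_if_mvec_weyl_vec_eq:
  assumes "\<And>\<nu> i. \<nu> < 9 \<Longrightarrow> i < 9 \<Longrightarrow> mvec 9 A (weyl_vec \<nu>) i = mvec 9 B (weyl_vec \<nu>) i"
  shows "meq 9 A B"
  unfolding meq_def
proof (intro allI impI)
  fix i j :: nat assume ij: "i < 9" "j < 9"
  have coeff: "3 * X i j = (\<Sum>\<nu><9. mvec 9 X (weyl_vec \<nu>) i * cnj (weyl_vec \<nu> j))" for X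
  proof -
    have "(\<Sum>\<nu><9. mvec 9 X (weyl_vec \<nu>) i * cnj (weyl_vec \<nu> j))
        = (\<Sum>c<9. X i c * (\<Sum>\<nu><9. weyl_vec \<nu> c * cnj (weyl_vec \<nu> j)))"
      unfolding mvec_def sum_distrib_right sum_distrib_left by (subst sum.swap) (simp add: mult.assoc)
    also have "\<dots> = (\<Sum>c<9. X i c * (if c = j then 3 else 0))"
      by (intro sum.cong refl) (simp add: weyl_vec_orthogonal ij)
    also have "\<dots> = 3 * X i j" using ij by (simp add: if_distrib cong: if_cong)
    finally show ?thesis by simp
  qed
  have "3 * A i j = 3 * B i j" unfolding coeff using assms ij by simp
  then show "A i j = B i j" by simp
qed

section \<open>The functions \<open>f\<^sub>i\<close>\<close>

definition exp_part :: "nat \<Rightarrow> real \<Rightarrow> real" where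
  "exp_part r x = (\<Sum>n. if n mod 3 = r then x ^ n / fact n else 0)"

lemma summable_exp_part: "summable (\<lambda>n. if n mod 3 = r then x ^ n / fact n else (0::real))"
proof (rule summable_comparison_test)
  show "\<exists>N. \<forall>n\<ge>N. norm (if n mod 3 = r then x ^ n / fact n else 0) \<le> \<bar>x\<bar> ^ n / fact n"
    by (auto simp: abs_mult power_abs)
  show "summable (\<lambda>n. \<bar>x\<bar> ^ n / fact n)"
    using summable_exp[of "\<bar>x\<bar>"] by (simp add: divide_inverse mult.commute)
qed

lemma exp_part_nonneg: "0 \<le> x \<Longrightarrow> 0 \<le> exp_part r x"
  unfolding exp_part_def by (intro suminf_nonneg summable_exp_part) simp

lemma exp_cube_root_split:
  assumes "w ^ 3 = 1"
  shows "exp (w * complex_of_real x) = (\<Sum>r<3. w ^ r * complex_of_real (exp_part r x))"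
proof -
  have series_term: "(w * complex_of_real x) ^ n /\<^sub>R fact n
      = (\<Sum>r<3. w ^ r * complex_of_real (if n mod 3 = r then x ^ n / fact n else 0))" for n
  proof -
    have "(\<Sum>r<3. w ^ r * complex_of_real (if n mod 3 = r then x ^ n / fact n else 0))
        = w ^ (n mod 3) * complex_of_real (x ^ n / fact n)"
      by (simp add: if_distrib[of complex_of_real] if_distrib[of "\<lambda>z. _ * z"] cong: if_cong)
    then show ?thesis
      using cube_root_power_mod[OF assms, of n]
      by (simp add: scaleR_conv_of_real power_mult_distrib divide_inverse)
  qed
  have "(\<lambda>n. \<Sum>r<3. w ^ r * complex_of_real (if n mod 3 = r then x ^ n / fact n else 0))
      sums (\<Sum>r<3. w ^ r * complex_of_real (exp_part r x))"
    unfolding exp_part_def by (intro sums_sum sums_mult sums_of_real summable_sums summable_exp_part)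
  with exp_converges[of "w * complex_of_real x"] show ?thesis
    unfolding series_term by (rule sums_unique2)
qed

text \<open>\<open>fprob_series j\<close> turns out to be \<open>f\<^sub>j\<^sub>+\<^sub>1\<close> (\<open>fprob_eq_series\<close>); in this form nonnegativity is
  evident.\<close>

definition fprob_series :: "nat \<Rightarrow> real \<Rightarrow> real \<Rightarrow> real" where
  "fprob_series j x y = exp (-(x + y)) * (\<Sum>r<3. exp_part ((r + j) mod 3) x * exp_part r y)"

lemma fprob_series_nonneg: "0 \<le> x \<Longrightarrow> 0 \<le> y \<Longrightarrow> 0 \<le> fprob_series j x y"
  unfolding fprob_series_def by (intro mult_nonneg_nonneg sum_nonneg exp_part_nonneg) auto

lemma cube_root_product_identity:
  fixes w a0 a1 a2 b0 b1 b2 :: complex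
  assumes "w ^ 3 = 1"
  shows "(a0 + w * a1 + w^2 * a2) * (b0 + w^2 * b1 + (w^2)^2 * b2)
       = (a0*b0 + a1*b1 + a2*b2) + w * (a1*b0 + a2*b1 + a0*b2) + w^2 * (a2*b0 + a0*b1 + a1*b2)"
proof -
  have "w * w^2 = 1" "w * w = w^2" using assms by (simp_all add: eval_nat_numeral)
  moreover from this have "w^2 * w^2 = w" "(w^2)^2 = w" by (metis mult.assoc mult_1 power2_eq_square)+
  ultimately show ?thesis by algebra
qed

lemma fprob_series_expand:
  "fprob_series 0 x y = exp (-(x + y)) * (exp_part 0 x * exp_part 0 y + exp_part 1 x * exp_part 1 y + exp_part 2 x * exp_part 2 y)"
  "fprob_series 1 x y = exp (-(x + y)) * (exp_part 1 x * exp_part 0 y + exp_part 2 x * exp_part 1 y + exp_part 0 x * exp_part 2 y)"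
  "fprob_series 2 x y = exp (-(x + y)) * (exp_part 2 x * exp_part 0 y + exp_part 0 x * exp_part 1 y + exp_part 1 x * exp_part 2 y)"
  by (simp_all add: fprob_series_def sum_lessThan_3 numeral_2_eq_2)

lemma exp_generator_cube_root:
  assumes "w ^ 3 = 1"
  shows "exp (complex_of_real x * (w - 1) + complex_of_real y * (w^2 - 1))
       = (\<Sum>j<3. w ^ j * complex_of_real (fprob_series j x y))"
proof -
  have "(w^2)^3 = 1" by (metis assms power_mult mult.commute power_one)
  have "complex_of_real x * (w - 1) + complex_of_real y * (w^2 - 1)
      = complex_of_real (-(x + y)) + (w * complex_of_real x + w^2 * complex_of_real y)"
    by (simp add: algebra_simps)
  then have "exp (complex_of_real x * (w - 1) + complex_of_real y * (w^2 - 1))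
      = complex_of_real (exp (-(x + y))) * (exp (w * complex_of_real x) * exp (w^2 * complex_of_real y))"
    by (simp only: exp_add exp_of_real)
  also have "\<dots> = complex_of_real (exp (-(x + y))) *
     ((of_real (exp_part 0 x) + w * of_real (exp_part 1 x) + w^2 * of_real (exp_part 2 x)) *
      (of_real (exp_part 0 y) + w^2 * of_real (exp_part 1 y) + (w^2)^2 * of_real (exp_part 2 y)))"
    unfolding exp_cube_root_split[OF assms] exp_cube_root_split[OF \<open>(w^2)^3 = 1\<close>] sum_lessThan_3
    by simp
  also have "\<dots> = (\<Sum>j<3. w ^ j * complex_of_real (fprob_series j x y))"
    unfolding cube_root_product_identity[OF assms] sum_lessThan_3 fprob_series_expand
    by (simp add: algebra_simps)
  finally show ?thesis .
qed

lemma fprob_series_at_cube_roots: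
  fixes x y :: real
  defines "E \<equiv> exp (-(3/2) * (x + y))" and "c \<equiv> cos (sqrt 3 / 2 * (x - y))"
    and "s \<equiv> sin (sqrt 3 / 2 * (x - y))"
  shows "fprob_series 0 x y + fprob_series 1 x y + fprob_series 2 x y = 1"
    and "E * c = fprob_series 0 x y - fprob_series 1 x y / 2 - fprob_series 2 x y / 2"
    and "E * s = sqrt 3 / 2 * (fprob_series 1 x y - fprob_series 2 x y)"
proof -
  define G where "G j = fprob_series j x y" for j
  have "complex_of_real (G 0 + G 1 + G 2) = 1"
    using exp_generator_cube_root[of 1 x y] by (simp add: sum_lessThan_3 G_def)
  then show "fprob_series 0 x y + fprob_series 1 x y + fprob_series 2 x y = 1"
    unfolding G_def using of_real_eq_1_iff by blast
  define z where "z = complex_of_real x * (omega - 1) + complex_of_real y * (omega^2 - 1)"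
  have ez: "exp z = complex_of_real (G 0) + omega * complex_of_real (G 1) + omega^2 * complex_of_real (G 2)"
    unfolding z_def G_def exp_generator_cube_root[OF omega_cube] sum_lessThan_3 by simp
  have Re_z: "Re z = -(3/2) * (x + y)" and Im_z: "Im z = sqrt 3 / 2 * (x - y)"
    unfolding z_def by (simp_all add: omega_eq algebra_simps)
  then have "Re (exp z) = E * c" "Im (exp z) = E * s"
    unfolding Re_exp Im_exp Re_z Im_z E_def c_def s_def by simp_all
  then show "E * c = fprob_series 0 x y - fprob_series 1 x y / 2 - fprob_series 2 x y / 2"
    and "E * s = sqrt 3 / 2 * (fprob_series 1 x y - fprob_series 2 x y)"
    unfolding ez G_def by (simp_all add: omega_eq algebra_simps)
qed

lemma fprob_eq_series:
  "fprob 1 x y = fprob_series 0 x y" "fprob 2 x y = fprob_series 1 x y" "fprob 3 x y = fprob_series 2 x y"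
proof -
  define E c s where "E = exp (-(3/2) * (x + y))" and "c = cos (sqrt 3 / 2 * (x - y))"
    and "s = sin (sqrt 3 / 2 * (x - y))"
  define G0 G1 G2 where "G0 = fprob_series 0 x y" and "G1 = fprob_series 1 x y"
    and "G2 = fprob_series 2 x y"
  have eqs: "G0 + G1 + G2 = 1" "E * c = G0 - G1 / 2 - G2 / 2" "E * s = sqrt 3 / 2 * (G1 - G2)"
    unfolding E_def c_def s_def G0_def G1_def G2_def by (rule fprob_series_at_cube_roots)+
  have "sqrt 3 * E * s = sqrt 3 * (E * s)" by simp
  also have "\<dots> = (sqrt 3 * sqrt 3) / 2 * G1 - (sqrt 3 * sqrt 3) / 2 * G2"
    unfolding eqs(3) by (simp add: field_simps)
  finally have s3: "sqrt 3 * E * s = 3 / 2 * G1 - 3 / 2 * G2" by simp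
  have "fprob i x y = (if i = 1 then (1 + 2 * (E * c)) / 3
         else if i = 2 then (1 - E * c + sqrt 3 * E * s) / 3
         else (1 - E * c - sqrt 3 * E * s) / 3)" for i
    unfolding fprob_def Let_def E_def c_def s_def by (simp add: mult.assoc)
  then show "fprob 1 x y = fprob_series 0 x y" "fprob 2 x y = fprob_series 1 x y"
    "fprob 3 x y = fprob_series 2 x y"
    unfolding G0_def[symmetric] G1_def[symmetric] G2_def[symmetric] s3 eqs(2) using eqs(1) by simp_all
qed

lemma fprob_nonneg: "0 \<le> x \<Longrightarrow> 0 \<le> y \<Longrightarrow> i \<in> {1, 2, 3} \<Longrightarrow> 0 \<le> fprob i x y"
  using fprob_series_nonneg fprob_eq_series by auto

lemma fprob_generating:
  assumes "w ^ 3 = 1"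
  shows "complex_of_real (fprob 1 x y) + w * complex_of_real (fprob 2 x y) + w^2 * complex_of_real (fprob 3 x y)
       = exp (complex_of_real x * (w - 1) + complex_of_real y * (w^2 - 1))"
  unfolding exp_generator_cube_root[OF assms] fprob_eq_series sum_lessThan_3 by simp

section \<open>Product channels\<close>

lemma superop_adjoint_pair:
  assumes "cmod z = 1" "meq 3 (Weyl a) (\<lambda>i j. z * adj (Weyl b) i j)" "r < 9" "c < 9"
  shows "superop (Weyl a) r c = cnj (superop (Weyl b) c r)"
proof -
  have W: "Weyl a i j = z * cnj (Weyl b j i)" if "i < 3" "j < 3" for i j
    using assms(2) that unfolding meq_def adj_def by auto
  have "z * cnj z = 1" using complex_norm_square[of z] assms(1) by simp
  then show ?thesis
    unfolding superop_def using assms(3,4) by (simp add: W algebra_simps)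
qed

lemma weyl_vec_norm_neq_0: "\<nu> < 9 \<Longrightarrow> (\<Sum>r<9. cnj (weyl_vec \<nu> r) * weyl_vec \<nu> r) \<noteq> 0"
proof -
  assume \<nu>: "\<nu> < 9"
  have "(\<Sum>r<9. cnj (weyl_vec \<nu> r) * weyl_vec \<nu> r) = complex_of_real (\<Sum>r<9. (cmod (weyl_vec \<nu> r))^2)"
    unfolding of_real_sum by (intro sum.cong refl) (metis complex_norm_square mult.commute)
  moreover have "(cmod (weyl_vec \<nu> (3 * (\<nu> div 3))))^2 \<le> (\<Sum>r<9. (cmod (weyl_vec \<nu> r))^2)"
    by (rule member_le_sum[where f="\<lambda>r. (cmod (weyl_vec \<nu> r))^2"]) (use \<nu> in auto)
  then have "1 \<le> (\<Sum>r<9. (cmod (weyl_vec \<nu> r))^2)" using weyl_vec_diagonal[OF \<nu>] by simp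
  ultimately show ?thesis by (metis of_real_eq_0_iff not_one_le_zero)
qed

text \<open>\<open>superop (Weyl a)\<close> is the adjoint of \<open>superop (Weyl b)\<close>, so their eigenvalues on the
  common eigenbasis are conjugate.\<close>

lemma weyl_char_adjoint_pair:
  assumes "a < 9" "b < 9" "\<exists>z. cmod z = 1 \<and> meq 3 (Weyl a) (\<lambda>i j. z * adj (Weyl b) i j)" "\<nu> < 9"
  shows "weyl_char b \<nu> = cnj (weyl_char a \<nu>)"
proof -
  obtain z where z: "cmod z = 1" "meq 3 (Weyl a) (\<lambda>i j. z * adj (Weyl b) i j)" using assms(3) by blast
  define v where "v = weyl_vec \<nu>"
  define N where "N = (\<Sum>r<9. cnj (v r) * v r)"
  have "weyl_char a \<nu> * N = (\<Sum>r<9. cnj (v r) * mvec 9 (superop (Weyl a)) v r)"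
    unfolding N_def v_def sum_distrib_left by (intro sum.cong refl) (simp add: superop_Weyl_eigen assms)
  also have "\<dots> = (\<Sum>r<9. \<Sum>c<9. cnj (v r) * (cnj (superop (Weyl b) c r) * v c))"
    unfolding mvec_def sum_distrib_left
    by (intro sum.cong refl) (simp add: superop_adjoint_pair[OF z] assms)
  also have "\<dots> = (\<Sum>c<9. v c * cnj (mvec 9 (superop (Weyl b)) v c))"
    unfolding mvec_def by (subst sum.swap) (simp add: sum_distrib_left algebra_simps)
  also have "\<dots> = cnj (weyl_char b \<nu>) * N"
    unfolding N_def v_def sum_distrib_left by (intro sum.cong refl) (simp add: superop_Weyl_eigen assms)
  finally have "weyl_char a \<nu> = cnj (weyl_char b \<nu>)"
    using weyl_vec_norm_neq_0[OF assms(4)] unfolding N_def v_def by simp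
  then show ?thesis by simp
qed

lemma sympl_eq_0_iff:
  assumes "a < 9" "\<alpha> < 9" "a \<noteq> 0"
  shows "sympl \<alpha> a = 0 \<longleftrightarrow> \<alpha> = 0 \<or> \<alpha> = a \<or> \<alpha> = zneg a"
  using less_9_cases[OF assms(1)] less_9_cases[OF assms(2)] assms(3)
  by (elim disjE) (simp_all add: sympl_def zneg_def)

lemma sympl_adjoint_pairs_neq_0:
  assumes "a \<in> {1..8}" "b \<in> {1..8}" "\<alpha> \<in> {1..8}" "\<alpha> \<noteq> a" "\<alpha> \<noteq> b"
    and "\<And>\<nu>. \<nu> < 9 \<Longrightarrow> weyl_char b \<nu> = cnj (weyl_char a \<nu>)"
  shows "sympl \<alpha> a \<noteq> 0"
proof
  assume "sympl \<alpha> a = 0"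
  then have "\<alpha> = zneg a" using sympl_eq_0_iff assms(1,3,4) by auto
  then have "weyl_char \<alpha> \<nu> = weyl_char b \<nu>" if "\<nu> < 9" for \<nu>
    using assms(1,6) that by (simp add: weyl_char_zneg_left)
  then have "\<alpha> = b" using weyl_char_inj assms(2,3) by auto
  with assms(5) show False ..
qed

text \<open>If \<open>sympl \<alpha> a \<noteq> 0\<close>, then \<open>a, \<alpha>\<close> is a basis of \<open>\<int>\<^sub>3\<^sup>2\<close> and \<open>coords a \<alpha> \<mu>\<close> are the
  coordinates of \<open>\<mu>\<close> in it; note that \<open>sympl \<alpha> a\<close> is its own inverse mod 3.\<close>

definition coords :: "nat \<Rightarrow> nat \<Rightarrow> nat \<Rightarrow> nat \<times> nat" where
  "coords a \<alpha> \<mu> = (sympl \<alpha> a * sympl \<alpha> \<mu> mod 3, sympl \<alpha> a * sympl \<mu> a mod 3)"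

lemma coords_less_3: "fst (coords a \<alpha> \<mu>) < 3" "snd (coords a \<alpha> \<mu>) < 3"
  by (simp_all add: coords_def)

lemma coords_arith:
  fixes k l k1 l1 k2 l2 :: nat
  assumes "k < 3" "l < 3" "k1 < 3" "l1 < 3" "k2 < 3" "l2 < 3" "(l2 * k1 + 2 * k2 * l1) mod 3 \<noteq> 0"
  shows "k = (((l2 * k1 + 2 * k2 * l1) mod 3 * ((l2 * k + 2 * k2 * l) mod 3)) mod 3 * k1
              + ((l2 * k1 + 2 * k2 * l1) mod 3 * ((l * k1 + 2 * k * l1) mod 3)) mod 3 * k2) mod 3
       \<and> l = (((l2 * k1 + 2 * k2 * l1) mod 3 * ((l2 * k + 2 * k2 * l) mod 3)) mod 3 * l1
              + ((l2 * k1 + 2 * k2 * l1) mod 3 * ((l * k1 + 2 * k * l1) mod 3)) mod 3 * l2) mod 3"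
  using less_3_cases[OF assms(1)] less_3_cases[OF assms(2)] less_3_cases[OF assms(3)]
    less_3_cases[OF assms(4)] less_3_cases[OF assms(5)] less_3_cases[OF assms(6)] assms(7)
  by (elim disjE; simp)

lemma coords_decomp:
  assumes "a < 9" "\<alpha> < 9" "\<mu> < 9" "sympl \<alpha> a \<noteq> 0"
  shows "\<mu> div 3 = (fst (coords a \<alpha> \<mu>) * (a div 3) + snd (coords a \<alpha> \<mu>) * (\<alpha> div 3)) mod 3"
    and "\<mu> mod 3 = (fst (coords a \<alpha> \<mu>) * (a mod 3) + snd (coords a \<alpha> \<mu>) * (\<alpha> mod 3)) mod 3"
proof -
  have "\<mu> div 3 < 3" "\<mu> mod 3 < 3" "a div 3 < 3" "a mod 3 < 3" "\<alpha> div 3 < 3" "\<alpha> mod 3 < 3"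
    using assms by auto
  note decomp = coords_arith[OF this assms(4)[unfolded sympl_def]]
  show "\<mu> div 3 = (fst (coords a \<alpha> \<mu>) * (a div 3) + snd (coords a \<alpha> \<mu>) * (\<alpha> div 3)) mod 3"
    unfolding coords_def sympl_def fst_conv snd_conv by (rule conjunct1[OF decomp])
  show "\<mu> mod 3 = (fst (coords a \<alpha> \<mu>) * (a mod 3) + snd (coords a \<alpha> \<mu>) * (\<alpha> mod 3)) mod 3"
    unfolding coords_def sympl_def fst_conv snd_conv by (rule conjunct2[OF decomp])
qed

lemma weyl_char_coords:
  assumes "a < 9" "\<alpha> < 9" "\<mu> < 9" "sympl \<alpha> a \<noteq> 0"
  shows "weyl_char \<mu> \<nu> = weyl_char a \<nu> ^ fst (coords a \<alpha> \<mu>) * weyl_char \<alpha> \<nu> ^ snd (coords a \<alpha> \<mu>)"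
proof -
  define i j where "i = fst (coords a \<alpha> \<mu>)" and "j = snd (coords a \<alpha> \<mu>)"
  have "weyl_char \<mu> \<nu> = omega ^ (((i * (a mod 3) + j * (\<alpha> mod 3)) mod 3 * (\<nu> div 3)
      + 2 * ((i * (a div 3) + j * (\<alpha> div 3)) mod 3) * (\<nu> mod 3)) mod 3)"
    unfolding weyl_char_def sympl_def i_def j_def coords_decomp[OF assms, symmetric] ..
  also have "\<dots> = omega ^ (((i * (a mod 3) + j * (\<alpha> mod 3)) * (\<nu> div 3)
      + 2 * (i * (a div 3) + j * (\<alpha> div 3)) * (\<nu> mod 3)) mod 3)"
    by (intro arg_cong[where f="\<lambda>n. omega ^ n"] mod_add_cong mod_mult_cong) simp_all
  also have "\<dots> = omega ^ ((a mod 3 * (\<nu> div 3) + 2 * (a div 3) * (\<nu> mod 3)) * i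
      + (\<alpha> mod 3 * (\<nu> div 3) + 2 * (\<alpha> div 3) * (\<nu> mod 3)) * j)"
    by (subst omega_power_mod[symmetric]) (simp add: algebra_simps)
  also have "\<dots> = weyl_char a \<nu> ^ i * weyl_char \<alpha> \<nu> ^ j"
    unfolding weyl_char_eq power_add power_mult ..
  finally show ?thesis unfolding i_def j_def .
qed

lemma bij_betw_coords:
  assumes "a < 9" "\<alpha> < 9" "sympl \<alpha> a \<noteq> 0"
  shows "bij_betw (coords a \<alpha>) {..<9} ({..<3} \<times> {..<3})"
proof -
  have "inj_on (coords a \<alpha>) {..<9}"
  proof (rule inj_onI)
    fix x y assume "x \<in> {..<9}" "y \<in> {..<9}" "coords a \<alpha> x = coords a \<alpha> y"
    then show "x = y"
      using coords_decomp[OF assms(1,2) _ assms(3), of x] coords_decomp[OF assms(1,2) _ assms(3), of y]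
        nat_eq_iff_div_mod_3[of x y] by auto
  qed
  moreover have "coords a \<alpha> ` {..<9} \<subseteq> {..<3} \<times> {..<3}"
    by (simp add: image_subset_iff mem_Times_iff coords_less_3)
  ultimately show ?thesis
    unfolding bij_betw_def by (simp add: card_subset_eq card_image card_cartesian_product)
qed

lemma bij_betw_Suc_coords:
  assumes "a < 9" "\<alpha> < 9" "sympl \<alpha> a \<noteq> 0"
  shows "bij_betw (map_prod Suc Suc \<circ> coords a \<alpha>) {0..<9} ({1, 2, 3} \<times> {1, 2, 3})"
proof -
  have "Suc ` {..<3} = {1, 2, 3}" by (auto simp: numeral_3_eq_3 lessThan_Suc)
  then have "bij_betw Suc {..<3} {1, 2, 3}" by (simp add: bij_betw_def)
  then have "bij_betw (map_prod Suc Suc) ({..<3} \<times> {..<3}) ({1, 2, 3} \<times> {1, 2, 3})"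
    using bij_betw_map_prod by blast
  then show ?thesis
    unfolding atLeast0LessThan by (rule bij_betw_trans[OF bij_betw_coords[OF assms]])
qed

definition product_prob :: "nat \<Rightarrow> nat \<Rightarrow> real \<Rightarrow> real \<Rightarrow> real \<Rightarrow> real \<Rightarrow> nat \<Rightarrow> real" where
  "product_prob a \<alpha> x1 y1 x2 y2 \<mu> = (if \<mu> < 9
     then fprob (Suc (fst (coords a \<alpha> \<mu>))) x1 y1 * fprob (Suc (snd (coords a \<alpha> \<mu>))) x2 y2 else 0)"

lemma chan_eigval_product_prob:
  fixes \<nu> :: nat
  assumes "a < 9" "\<alpha> < 9" "sympl \<alpha> a \<noteq> 0"
  defines "X \<equiv> weyl_char a \<nu>" and "Y \<equiv> weyl_char \<alpha> \<nu>"
  shows "chan_eigval (product_prob a \<alpha> x1 y1 x2 y2) \<nu>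
    = exp (complex_of_real x1 * (X - 1) + complex_of_real y1 * (X^2 - 1)) *
      exp (complex_of_real x2 * (Y - 1) + complex_of_real y2 * (Y^2 - 1))"
proof -
  define H where "H = (\<lambda>(i, j). complex_of_real (fprob (Suc i) x1 y1) * X ^ i
                              * (complex_of_real (fprob (Suc j) x2 y2) * Y ^ j))"
  have "chan_eigval (product_prob a \<alpha> x1 y1 x2 y2) \<nu> = (\<Sum>\<mu><9. H (coords a \<alpha> \<mu>))"
    unfolding chan_eigval_def
    by (intro sum.cong refl) (auto simp: product_prob_def H_def X_def Y_def weyl_char_coords[OF assms(1,2) _ assms(3)]
        split: prod.split)
  also have "\<dots> = (\<Sum>z\<in>{..<3} \<times> {..<3}. H z)"
    by (rule sum.reindex_bij_betw[OF bij_betw_coords[OF assms(1-3)]])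
  also have "\<dots> = (\<Sum>i<3. complex_of_real (fprob (Suc i) x1 y1) * X ^ i) *
                  (\<Sum>j<3. complex_of_real (fprob (Suc j) x2 y2) * Y ^ j)"
    unfolding sum_product sum.cartesian_product H_def ..
  also have "\<dots> = exp (complex_of_real x1 * (X - 1) + complex_of_real y1 * (X^2 - 1)) *
      exp (complex_of_real x2 * (Y - 1) + complex_of_real y2 * (Y^2 - 1))"
  proof -
    have "Suc 2 = 3" by simp
    then show ?thesis
      unfolding fprob_generating[OF weyl_char_cube, symmetric] X_def Y_def sum_lessThan_3
        One_nat_def[symmetric] Suc_1
      by (simp add: mult.commute)
  qed
  finally show ?thesis .
qed

lemma product_prob_in_simplex:
  assumes "a < 9" "\<alpha> < 9" "sympl \<alpha> a \<noteq> 0" "0 \<le> x1" "0 \<le> y1" "0 \<le> x2" "0 \<le> y2"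
  shows "product_prob a \<alpha> x1 y1 x2 y2 \<in> weyl_simplex"
proof (rule weyl_simplexI)
  fix \<mu>
  have "Suc (fst (coords a \<alpha> \<mu>)) \<in> {1, 2, 3}" "Suc (snd (coords a \<alpha> \<mu>)) \<in> {1, 2, 3}"
    using less_3_cases[OF coords_less_3(1)] less_3_cases[OF coords_less_3(2)] by auto
  then show "0 \<le> product_prob a \<alpha> x1 y1 x2 y2 \<mu>"
    unfolding product_prob_def using fprob_nonneg assms(4-7) by (auto intro!: mult_nonneg_nonneg)
qed (simp_all add: product_prob_def chan_eigval_product_prob[OF assms(1-3)])

lemma product_prob_channel:
  assumes "a < 9" "b < 9" "\<alpha> < 9" "\<beta> < 9" "sympl \<alpha> a \<noteq> 0"
    and "\<And>\<nu>. \<nu> < 9 \<Longrightarrow> weyl_char b \<nu> = cnj (weyl_char a \<nu>)"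
    and "\<And>\<nu>. \<nu> < 9 \<Longrightarrow> weyl_char \<beta> \<nu> = cnj (weyl_char \<alpha> \<nu>)"
  shows "meq 9 (weyl_channel (product_prob a \<alpha> ta tb t\<alpha> t\<beta>))
               (mexp 9 (\<lambda>r c. complex_of_real ta * Lgen a r c + complex_of_real tb * Lgen b r c
                             + complex_of_real t\<alpha> * Lgen \<alpha> r c + complex_of_real t\<beta> * Lgen \<beta> r c))"
    (is "meq 9 ?C (mexp 9 ?M)")
proof (rule meq_if_mvec_weyl_vec_eq)
  fix \<nu> i :: nat assume \<nu>i: "\<nu> < 9" "i < 9"
  define X Y where "X = weyl_char a \<nu>" and "Y = weyl_char \<alpha> \<nu>"
  define l where "l = complex_of_real ta * (X - 1) + complex_of_real tb * (X^2 - 1)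
                   + complex_of_real t\<alpha> * (Y - 1) + complex_of_real t\<beta> * (Y^2 - 1)"
  have "weyl_char b \<nu> = X^2" "weyl_char \<beta> \<nu> = Y^2"
    unfolding X_def Y_def using assms(6,7) \<nu>i cnj_weyl_char by auto
  then have M: "mvec 9 ?M (weyl_vec \<nu>) k = l * weyl_vec \<nu> k" if "k < 9" for k
    unfolding mvec_add mvec_scale l_def X_def Y_def using that \<nu>i assms(1-4)
    by (simp add: mvec_Lgen algebra_simps)
  have "mvec 9 ?C (weyl_vec \<nu>) i = chan_eigval (product_prob a \<alpha> ta tb t\<alpha> t\<beta>) \<nu> * weyl_vec \<nu> i"
    by (rule mvec_weyl_channel[OF \<nu>i])
  also have "chan_eigval (product_prob a \<alpha> ta tb t\<alpha> t\<beta>) \<nu> = exp l"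
    unfolding chan_eigval_product_prob[OF assms(1,3,5)] l_def X_def Y_def exp_add[symmetric]
    by (simp add: algebra_simps)
  also have "exp l * weyl_vec \<nu> i = mvec 9 (mexp 9 ?M) (weyl_vec \<nu>) i"
    by (rule mvec_mexp_eigen[OF M \<nu>i(2), symmetric])
  finally show "mvec 9 ?C (weyl_vec \<nu>) i = mvec 9 (mexp 9 ?M) (weyl_vec \<nu>) i" .
qed

section \<open>The boundary of \<open>\<A>\<^sub>3\<^sup>Q\<close>\<close>

lemma Re_gen_eigval: "Re (gen_eigval t \<nu>) = (\<Sum>\<mu>\<in>{1..8}. t \<mu> * (Re (weyl_char \<mu> \<nu>) - 1))"
  unfolding gen_eigval_def by (simp add: Re_sum)

lemma sum_Re_gen_eigval: "(\<Sum>\<nu><9. Re (gen_eigval t \<nu>)) = -9 * (\<Sum>\<mu>\<in>{1..8}. t \<mu>)"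
proof -
  have "(\<Sum>\<nu><9. Re (gen_eigval t \<nu>)) = (\<Sum>\<mu>\<in>{1..8}. t \<mu> * (Re (\<Sum>\<nu><9. weyl_char \<mu> \<nu>) - 9))"
    unfolding Re_gen_eigval
    by (subst sum.swap) (simp add: sum_distrib_left[symmetric] sum_subtractf Re_sum)
  also have "\<dots> = (\<Sum>\<mu>\<in>{1..8}. t \<mu> * (-9))"
    by (intro sum.cong refl) (auto simp: sum_weyl_char_right)
  finally show ?thesis by (simp add: sum_negf sum_distrib_right[symmetric] mult.commute)
qed

lemma Re_gen_eigval_ge:
  assumes "\<And>\<mu>. \<mu> \<in> {1..8} \<Longrightarrow> 0 \<le> t \<mu>"
  shows "-9 * (\<Sum>\<mu>\<in>{1..8}. t \<mu>) \<le> 6 * Re (gen_eigval t \<nu>)"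
proof -
  have "-9 * (\<Sum>\<mu>\<in>{1..8}. t \<mu>) = 6 * (\<Sum>\<mu>\<in>{1..8}. t \<mu> * (-1/2 - 1))"
    by (simp add: sum_distrib_left sum_distrib_right)
  also have "\<dots> \<le> 6 * Re (gen_eigval t \<nu>)"
    unfolding Re_gen_eigval using assms
    by (intro mult_left_mono sum_mono mult_left_mono) (auto simp: Re_weyl_char)
  finally show ?thesis .
qed

lemma Re_gen_eigval_eq:
  assumes "\<And>\<mu>. \<mu> \<in> {1..8} \<Longrightarrow> t \<mu> = 0 \<or> weyl_char \<mu> \<nu> \<noteq> 1"
  shows "6 * Re (gen_eigval t \<nu>) = -9 * (\<Sum>\<mu>\<in>{1..8}. t \<mu>)"
proof -
  have "Re (gen_eigval t \<nu>) = (\<Sum>\<mu>\<in>{1..8}. t \<mu> * (-1/2 - 1))"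
    unfolding Re_gen_eigval using assms by (intro sum.cong refl) (force simp: Re_weyl_char)
  also have "\<dots> = (\<Sum>\<mu>\<in>{1..8}. t \<mu>) * (-1/2 - 1)"
    by (rule sum_distrib_right[symmetric])
  finally show ?thesis by simp
qed

lemma norm_chan_eigval:
  "meq 9 (weyl_channel p) (mexp 9 (gen_comb t)) \<Longrightarrow> \<nu> < 9 \<Longrightarrow> cmod (chan_eigval p \<nu>) = exp (Re (gen_eigval t \<nu>))"
  by (simp add: chan_eigval_eq_exp)

lemma prod_norm_chan_eigval:
  assumes "meq 9 (weyl_channel p) (mexp 9 (gen_comb t))"
  shows "(\<Prod>\<nu><9. cmod (chan_eigval p \<nu>)) = exp (-9 * (\<Sum>\<mu>\<in>{1..8}. t \<mu>))"
proof -
  have "(\<Prod>\<nu><9. cmod (chan_eigval p \<nu>)) = exp (\<Sum>\<nu><9. Re (gen_eigval t \<nu>))"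
    by (simp add: norm_chan_eigval[OF assms] exp_sum)
  then show ?thesis unfolding sum_Re_gen_eigval .
qed

lemma norm_chan_eigval_power_6:
  "meq 9 (weyl_channel p) (mexp 9 (gen_comb t)) \<Longrightarrow> \<nu> < 9
    \<Longrightarrow> cmod (chan_eigval p \<nu>) ^ 6 = exp (6 * Re (gen_eigval t \<nu>))"
  by (simp add: norm_chan_eigval exp_of_nat_mult[symmetric])

text \<open>A necessary condition for membership in \<open>\<A>\<^sub>3\<^sup>Q\<close>: the product of all eigenvalue moduli is
  \<open>exp (-9 \<Sum> t)\<close>, whereas \<open>|\<lambda>\<^sub>\<nu>|\<^sup>6 = exp (6 Re l\<^sub>\<nu>) \<ge> exp (-9 \<Sum> t)\<close> since \<open>Re \<chi> \<ge> -1/2\<close>.\<close>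

lemma AQ3_eigval_ineq:
  assumes "q \<in> AQ3" "\<nu> < 9"
  shows "(\<Prod>\<nu>'<9. cmod (chan_eigval q \<nu>')) \<le> cmod (chan_eigval q \<nu>) ^ 6"
proof -
  obtain t where "\<forall>\<mu>\<in>{1..8}. 0 \<le> t \<mu>" "meq 9 (weyl_channel q) (mexp 9 (gen_comb t))"
    using assms(1) unfolding AQ3_def by blast
  then have "(\<Prod>\<nu>'<9. cmod (chan_eigval q \<nu>')) = exp (-9 * (\<Sum>\<mu>\<in>{1..8}. t \<mu>))"
    and "cmod (chan_eigval q \<nu>) ^ 6 = exp (6 * Re (gen_eigval t \<nu>))"
    and "-9 * (\<Sum>\<mu>\<in>{1..8}. t \<mu>) \<le> 6 * Re (gen_eigval t \<nu>)"
    using prod_norm_chan_eigval norm_chan_eigval_power_6 assms(2) Re_gen_eigval_ge by auto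
  then show ?thesis by simp
qed

lemma prod_norm_chan_eigval_eq_power_6:
  assumes "meq 9 (weyl_channel p) (mexp 9 (gen_comb t))" "\<nu> < 9"
    and "\<And>\<mu>. \<mu> \<in> {1..8} \<Longrightarrow> t \<mu> = 0 \<or> weyl_char \<mu> \<nu> \<noteq> 1"
  shows "(\<Prod>\<nu>'<9. cmod (chan_eigval p \<nu>')) = cmod (chan_eigval p \<nu>) ^ 6"
  using Re_gen_eigval_eq[OF assms(3)]
  by (simp add: prod_norm_chan_eigval[OF assms(1)] norm_chan_eigval_power_6[OF assms(1,2)])

lemma chan_eigval_mix:
  "chan_eigval (\<lambda>\<mu>. (1 - e) * p \<mu> + e * r \<mu>) \<nu>
    = complex_of_real (1 - e) * chan_eigval p \<nu> + complex_of_real e * chan_eigval r \<nu>"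
  unfolding chan_eigval_def sum_distrib_left sum.distrib[symmetric]
  by (intro sum.cong refl) (simp add: algebra_simps)

lemma chan_eigval_zneg: "\<nu> < 9 \<Longrightarrow> chan_eigval p (zneg \<nu>) = cnj (chan_eigval p \<nu>)"
  unfolding chan_eigval_def by (simp add: weyl_char_zneg_right)

text \<open>Inverse character transform of the eigenvalue vector that is \<open>1\<close> at \<open>0\<close>, \<open>g\<close> at \<open>\<nu>\<^sub>0\<close>,
  \<open>cnj g\<close> at \<open>zneg \<nu>\<^sub>0\<close> and \<open>0\<close> elsewhere.\<close>

definition spike_prob :: "complex \<Rightarrow> nat \<Rightarrow> nat \<Rightarrow> real" where
  "spike_prob g \<nu>0 \<mu> = (if \<mu> < 9 then (1 + 2 * Re (g * cnj (weyl_char \<mu> \<nu>0))) / 9 else 0)"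

lemma chan_eigval_spike_prob:
  assumes "\<nu>0 < 9" "\<nu> < 9"
  shows "chan_eigval (spike_prob g \<nu>0) \<nu>
    = (if \<nu> = 0 then 1 else 0) + (if \<nu> = \<nu>0 then g else 0) + (if \<nu> = zneg \<nu>0 then cnj g else 0)"
proof -
  have "complex_of_real (2 * Re (g * cnj (weyl_char \<mu> \<nu>0))) = g * cnj (weyl_char \<mu> \<nu>0) + cnj g * weyl_char \<mu> \<nu>0"
    for \<mu> unfolding complex_add_cnj[symmetric] by simp
  then have "chan_eigval (spike_prob g \<nu>0) \<nu> = ((\<Sum>\<mu><9. weyl_char \<mu> \<nu>)
      + g * (\<Sum>\<mu><9. cnj (weyl_char \<mu> \<nu>0) * weyl_char \<mu> \<nu>)
      + cnj g * (\<Sum>\<mu><9. weyl_char \<mu> \<nu>0 * weyl_char \<mu> \<nu>)) / 9"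
    unfolding chan_eigval_def spike_prob_def
    by (simp add: sum_divide_distrib[symmetric] sum.distrib sum_distrib_left algebra_simps)
  also have "\<dots> = ((if \<nu> = 0 then 9 else 0) + g * (if \<nu>0 = \<nu> then 9 else 0)
      + cnj g * (if \<nu> = zneg \<nu>0 then 9 else 0)) / 9"
    unfolding sum_weyl_char_left[OF assms(2)] weyl_char_orthogonal[OF assms]
      weyl_char_orthogonal_zneg[OF assms] ..
  finally have eigval: "chan_eigval (spike_prob g \<nu>0) \<nu> = ((if \<nu> = 0 then 9 else 0)
      + g * (if \<nu>0 = \<nu> then 9 else 0) + cnj g * (if \<nu> = zneg \<nu>0 then 9 else 0)) / 9" .
  show ?thesis
    unfolding eigval by (cases "\<nu> = 0"; cases "\<nu> = \<nu>0"; cases "\<nu> = zneg \<nu>0") (auto simp: add_divide_distrib)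
qed

lemma spike_prob_in_simplex:
  assumes "cmod g = 1/2" "\<nu>0 < 9" "\<nu>0 \<noteq> 0"
  shows "spike_prob g \<nu>0 \<in> weyl_simplex"
proof (rule weyl_simplexI)
  fix \<mu>
  have "- cmod (g * cnj (weyl_char \<mu> \<nu>0)) \<le> Re (g * cnj (weyl_char \<mu> \<nu>0))"
    using abs_Re_le_cmod[of "g * cnj (weyl_char \<mu> \<nu>0)"] by linarith
  moreover have "cmod (g * cnj (weyl_char \<mu> \<nu>0)) = 1/2"
    using assms(1) by (simp add: norm_mult norm_weyl_char)
  ultimately show "0 \<le> spike_prob g \<nu>0 \<mu>" unfolding spike_prob_def by auto
next
  show "chan_eigval (spike_prob g \<nu>0) 0 = 1"
    using chan_eigval_spike_prob[OF assms(2), of 0] zneg_neq[OF assms(2,3)] assms(3) by simp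
qed (simp add: spike_prob_def)

lemma weyl_simplex_mix:
  assumes "p \<in> weyl_simplex" "r \<in> weyl_simplex" "0 \<le> e" "e \<le> 1"
  shows "(\<lambda>\<mu>. (1 - e) * p \<mu> + e * r \<mu>) \<in> weyl_simplex"
  using assms unfolding weyl_simplex_def
  by (auto simp: sum.distrib sum_distrib_left[symmetric] intro!: add_nonneg_nonneg mult_nonneg_nonneg)

lemma prod_norm_chan_eigval_split:
  assumes "\<nu>0 < 9" "\<nu>0 \<noteq> 0"
  shows "(\<Prod>\<nu><9. cmod (chan_eigval p \<nu>)) = cmod (chan_eigval p 0) * cmod (chan_eigval p \<nu>0) ^ 2
           * (\<Prod>\<nu>\<in>{..<9} - {0, \<nu>0, zneg \<nu>0}. cmod (chan_eigval p \<nu>))"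
proof -
  have neq: "zneg \<nu>0 \<noteq> \<nu>0" "zneg \<nu>0 \<noteq> 0" using zneg_neq[OF assms] by auto
  have "(\<Prod>\<nu><9. cmod (chan_eigval p \<nu>))
      = (\<Prod>\<nu>\<in>{..<9} - {0, \<nu>0, zneg \<nu>0}. cmod (chan_eigval p \<nu>)) * (\<Prod>\<nu>\<in>{0, \<nu>0, zneg \<nu>0}. cmod (chan_eigval p \<nu>))"
    by (rule prod.subset_diff) (use assms zneg_less_9 in auto)
  then show ?thesis
    using neq assms(2) by (simp add: chan_eigval_zneg[OF assms(1)] power2_eq_square mult.assoc)
qed

lemma prod_norm_chan_eigval_rest:
  assumes "p \<in> weyl_simplex" "\<nu>0 < 9" "\<nu>0 \<noteq> 0" "0 < cmod (chan_eigval p \<nu>0)"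
    and "(\<Prod>\<nu><9. cmod (chan_eigval p \<nu>)) = cmod (chan_eigval p \<nu>0) ^ 6"
  shows "(\<Prod>\<nu>\<in>{..<9} - {0, \<nu>0, zneg \<nu>0}. cmod (chan_eigval p \<nu>)) = cmod (chan_eigval p \<nu>0) ^ 4"
proof -
  have eq: "cmod (chan_eigval p \<nu>0) ^ 2 * (\<Prod>\<nu>\<in>{..<9} - {0, \<nu>0, zneg \<nu>0}. cmod (chan_eigval p \<nu>))
      = cmod (chan_eigval p \<nu>0) ^ 2 * cmod (chan_eigval p \<nu>0) ^ 4"
    using assms(5) unfolding prod_norm_chan_eigval_split[OF assms(2,3)] chan_eigval_0[OF assms(1)]
    by (simp add: power_add[symmetric])
  have "cmod (chan_eigval p \<nu>0) ^ 2 \<noteq> 0" using assms(4) by simp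
  from mult_left_cancel[THEN iffD1, OF this eq] show ?thesis .
qed

lemma chan_eigval_mix_spike:
  fixes e :: real and g :: complex
  assumes "p \<in> weyl_simplex" "\<nu>0 < 9" "\<nu>0 \<noteq> 0"
  defines "q \<equiv> \<lambda>\<mu>. (1 - e) * p \<mu> + e * spike_prob g \<nu>0 \<mu>"
  shows "chan_eigval q 0 = 1"
    and "chan_eigval q \<nu>0 = complex_of_real (1 - e) * chan_eigval p \<nu>0 + complex_of_real e * g"
    and "\<nu> \<in> {..<9} - {0, \<nu>0, zneg \<nu>0} \<Longrightarrow> chan_eigval q \<nu> = complex_of_real (1 - e) * chan_eigval p \<nu>"
  using zneg_neq[OF assms(2,3)] assms(3)
  by (auto simp: q_def chan_eigval_mix chan_eigval_spike_prob assms(2) chan_eigval_0[OF assms(1)])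

lemma shrink_factor_ineq:
  fixes e \<rho> :: real
  assumes "0 < \<rho>" "\<rho> \<le> 1" "0 < e" "e \<le> \<rho> / (2 * \<rho> + 1)"
  defines "\<kappa> \<equiv> 1 - e - e / (2 * \<rho>)"
  shows "e \<le> 1/2" "0 < \<kappa>" "\<kappa> ^ 4 < (1 - e) ^ 6"
proof -
  have e\<rho>: "e * (2 * \<rho> + 1) \<le> \<rho>" using assms(1,4) by (simp add: pos_le_divide_eq)
  then have "(2 * e) * (2 * \<rho> + 1) \<le> 1 * (2 * \<rho> + 1)" by (simp add: algebra_simps)
  then show e: "e \<le> 1/2" using assms(1) by (auto dest: mult_right_le_imp_le)
  show "0 < \<kappa>" using e\<rho> assms(1) unfolding \<kappa>_def by (simp add: field_simps)
  have "\<kappa> \<le> 1 - 3/2 * e" using assms(1-3) unfolding \<kappa>_def by (simp add: field_simps)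
  then have "\<kappa>^2 \<le> (1 - 3/2 * e)^2" using \<open>0 < \<kappa>\<close> by (intro power_mono) auto
  also have "\<dots> < (1 - e)^3"
  proof -
    have "(1 - e)^3 - (1 - 3/2 * e)^2 = e^2 * (3/4 - e)"
      by (simp add: algebra_simps power2_eq_square power3_eq_cube)
    moreover have "0 < e^2 * (3/4 - e)" using assms(3) e by (intro mult_pos_pos) auto
    ultimately show ?thesis by linarith
  qed
  finally have "(\<kappa>^2)^2 < ((1 - e)^3)^2" by (intro power_strict_mono) auto
  then show "\<kappa> ^ 4 < (1 - e) ^ 6" by (simp add: power_mult[symmetric])
qed

text \<open>Mixing in a little of \<open>spike_prob g \<nu>\<^sub>0\<close>, with \<open>g\<close> pointing opposite to the eigenvalue at
  \<open>\<nu>\<^sub>0\<close>, shrinks the eigenvalues at \<open>\<nu>\<^sub>0\<close> and \<open>zneg \<nu>\<^sub>0\<close> by the factor \<open>\<kappa>\<close> and the six others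
  by \<open>1 - e\<close>; since \<open>\<kappa>\<^sup>4 < (1 - e)\<^sup>6\<close>, equality in \<open>AQ3_eigval_ineq\<close> turns into violation.\<close>

lemma mix_spike_not_AQ3:
  assumes p: "p \<in> weyl_simplex" and \<nu>0: "\<nu>0 < 9" "\<nu>0 \<noteq> 0"
    and eq: "(\<Prod>\<nu><9. cmod (chan_eigval p \<nu>)) = cmod (chan_eigval p \<nu>0) ^ 6"
    and \<rho>: "0 < cmod (chan_eigval p \<nu>0)" "cmod (chan_eigval p \<nu>0) \<le> 1"
    and e: "0 < e" "e \<le> cmod (chan_eigval p \<nu>0) / (2 * cmod (chan_eigval p \<nu>0) + 1)"
  defines "g \<equiv> - chan_eigval p \<nu>0 / complex_of_real (2 * cmod (chan_eigval p \<nu>0))"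
  shows "(\<lambda>\<mu>. (1 - e) * p \<mu> + e * spike_prob g \<nu>0 \<mu>) \<notin> AQ3"
proof
  define \<rho> where "\<rho> = cmod (chan_eigval p \<nu>0)"
  define \<kappa> where "\<kappa> = 1 - e - e / (2 * \<rho>)"
  define R where "R = {..<9} - {0, \<nu>0, zneg \<nu>0}"
  define q where "q = (\<lambda>\<mu>. (1 - e) * p \<mu> + e * spike_prob g \<nu>0 \<mu>)"
  assume "q \<in> AQ3"
  note shrink = shrink_factor_ineq[OF \<rho> e, folded \<rho>_def, folded \<kappa>_def]
  have q0: "chan_eigval q 0 = 1"
    unfolding q_def by (rule chan_eigval_mix_spike(1)[OF p \<nu>0])
  have "chan_eigval q \<nu>0 = complex_of_real (1 - e) * chan_eigval p \<nu>0 + complex_of_real e * g"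
    unfolding q_def by (rule chan_eigval_mix_spike(2)[OF p \<nu>0])
  also have "\<dots> = chan_eigval p \<nu>0 * complex_of_real \<kappa>"
    using \<rho>(1) unfolding g_def \<kappa>_def \<rho>_def by (simp add: field_simps)
  finally have q\<nu>0: "cmod (chan_eigval q \<nu>0) = \<rho> * \<kappa>"
    using shrink(2) unfolding \<rho>_def by (simp add: norm_mult)
  have qR: "(\<Prod>\<nu>\<in>R. cmod (chan_eigval q \<nu>)) = (1 - e) ^ 6 * (\<Prod>\<nu>\<in>R. cmod (chan_eigval p \<nu>))"
  proof -
    have "card R = 6" unfolding R_def using zneg_neq[OF \<nu>0] \<nu>0 zneg_less_9 by (subst card_Diff_subset) auto
    moreover have "cmod (chan_eigval q \<nu>) = (1 - e) * cmod (chan_eigval p \<nu>)" if "\<nu> \<in> R" for \<nu>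
      using that shrink(1) unfolding q_def R_def
      by (simp add: chan_eigval_mix_spike(3)[OF p \<nu>0] norm_mult del: of_real_diff)
    ultimately show ?thesis by (simp add: prod.distrib)
  qed
  have pR: "(\<Prod>\<nu>\<in>R. cmod (chan_eigval p \<nu>)) = \<rho>^4"
    unfolding R_def \<rho>_def by (rule prod_norm_chan_eigval_rest[OF p \<nu>0 \<rho>(1) eq])
  have "(\<rho> * \<kappa>)^2 * ((1 - e)^6 * \<rho>^4) \<le> (\<rho> * \<kappa>)^6"
    using AQ3_eigval_ineq[OF \<open>q \<in> AQ3\<close> \<nu>0(1)]
    unfolding prod_norm_chan_eigval_split[OF \<nu>0] R_def[symmetric] q\<nu>0 qR pR q0 by simp
  then have "(\<rho>^6 * \<kappa>^2) * (1 - e)^6 \<le> (\<rho>^6 * \<kappa>^2) * \<kappa>^4"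
    by (simp add: algebra_simps eval_nat_numeral)
  moreover have "0 < \<rho>^6 * \<kappa>^2" using \<rho>(1) shrink(2) unfolding \<rho>_def by simp
  ultimately have "(1 - e)^6 \<le> \<kappa>^4" using mult_le_cancel_left_pos by blast
  with shrink(3) show False by simp
qed

lemma not_in_interior_of_if_segment_leaves:
  fixes p r :: "'a \<Rightarrow> real"
  assumes "0 < e0" and leaves: "\<And>e. 0 < e \<Longrightarrow> e \<le> e0 \<Longrightarrow> (\<lambda>\<mu>. (1 - e) * p \<mu> + e * r \<mu>) \<in> S - A"
  shows "p \<notin> (top_of_set S) interior_of A"
proof
  assume "p \<in> (top_of_set S) interior_of A"
  then obtain U where U: "open U" "p \<in> U" "S \<inter> U \<subseteq> A"
    unfolding interior_of_def openin_open by blast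
  define G where "G = (\<lambda>e::real. \<lambda>\<mu>. (1 - e) * p \<mu> + e * r \<mu>)"
  have "continuous_on UNIV G"
    unfolding G_def by (intro continuous_on_coordinatewise_then_product continuous_intros)
  then have "open (G -` U)" using continuous_on_open_vimage[OF open_UNIV] U(1) by auto
  moreover have "0 \<in> G -` U" using U(2) by (simp add: G_def)
  ultimately obtain \<delta> where \<delta>: "0 < \<delta>" "ball 0 \<delta> \<subseteq> G -` U" using open_contains_ball by blast
  define e where "e = min (\<delta> / 2) e0"
  have "0 < e" "e \<le> e0" "e \<in> ball 0 \<delta>" using \<delta>(1) assms(1) by (auto simp: e_def dist_real_def)
  then have "G e \<in> U" using \<delta>(2) by blast
  moreover have "G e \<in> S - A" using leaves \<open>0 < e\<close> \<open>e \<le> e0\<close> unfolding G_def by blast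
  ultimately show False using U(3) by blast
qed

lemma AQ3_boundaryI:
  assumes "p \<in> AQ3" "\<nu>0 < 9" "\<nu>0 \<noteq> 0"
    and "(\<Prod>\<nu><9. cmod (chan_eigval p \<nu>)) = cmod (chan_eigval p \<nu>0) ^ 6"
  shows "p \<in> AQ3_boundary"
proof -
  obtain t where p: "p \<in> weyl_simplex" and t: "\<forall>\<mu>\<in>{1..8}. 0 \<le> t \<mu>"
    "meq 9 (weyl_channel p) (mexp 9 (gen_comb t))"
    using assms(1) unfolding AQ3_def by blast
  define \<rho> where "\<rho> = cmod (chan_eigval p \<nu>0)"
  define g where "g = - chan_eigval p \<nu>0 / complex_of_real (2 * \<rho>)"
  have "Re (gen_eigval t \<nu>0) \<le> 0"
    unfolding Re_gen_eigval using t(1) by (intro sum_nonpos mult_nonneg_nonpos) (auto simp: Re_weyl_char)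
  then have \<rho>: "0 < \<rho>" "\<rho> \<le> 1" unfolding \<rho>_def norm_chan_eigval[OF t(2) assms(2)] by auto
  have "cmod g = 1/2" using \<rho>(1) unfolding g_def \<rho>_def by (simp add: norm_divide)
  have "p \<notin> (top_of_set weyl_simplex) interior_of AQ3"
  proof (rule not_in_interior_of_if_segment_leaves)
    show "0 < \<rho> / (2 * \<rho> + 1)" using \<rho> by simp
    fix e :: real assume e: "0 < e" "e \<le> \<rho> / (2 * \<rho> + 1)"
    have "\<rho> / (2 * \<rho> + 1) \<le> 1" using \<rho> by simp
    then have "(\<lambda>\<mu>. (1 - e) * p \<mu> + e * spike_prob g \<nu>0 \<mu>) \<in> weyl_simplex"
      using e by (intro weyl_simplex_mix[OF p spike_prob_in_simplex[OF \<open>cmod g = 1/2\<close> assms(2,3)]]) simp_all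
    moreover have "(\<lambda>\<mu>. (1 - e) * p \<mu> + e * spike_prob g \<nu>0 \<mu>) \<notin> AQ3"
      using \<rho> e unfolding g_def \<rho>_def by (intro mix_spike_not_AQ3[OF p assms(2-4)])
    ultimately show "(\<lambda>\<mu>. (1 - e) * p \<mu> + e * spike_prob g \<nu>0 \<mu>) \<in> weyl_simplex - AQ3" by blast
  qed
  moreover have "AQ3 \<subseteq> topspace (top_of_set weyl_simplex)" unfolding AQ3_def by auto
  then have "p \<in> (top_of_set weyl_simplex) closure_of AQ3" using closure_of_subset assms(1) by blast
  ultimately show ?thesis unfolding AQ3_boundary_def frontier_of_def by blast
qed

lemma gen_comb_four:
  assumes "a \<in> {1..8}" "b \<in> {1..8}" "\<alpha> \<in> {1..8}" "\<beta> \<in> {1..8}" "distinct [a, b, \<alpha>, \<beta>]"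
  shows "gen_comb (\<lambda>\<mu>. if \<mu> = a then ta else if \<mu> = b then tb else if \<mu> = \<alpha> then t\<alpha> else if \<mu> = \<beta> then t\<beta> else 0)
       = (\<lambda>r c. complex_of_real ta * Lgen a r c + complex_of_real tb * Lgen b r c
                + complex_of_real t\<alpha> * Lgen \<alpha> r c + complex_of_real t\<beta> * Lgen \<beta> r c)"
proof (intro ext)
  fix r c
  define t where "t = (\<lambda>\<mu>. if \<mu> = a then ta else if \<mu> = b then tb else if \<mu> = \<alpha> then t\<alpha> else if \<mu> = \<beta> then t\<beta> else 0)"
  have "gen_comb t r c = (\<Sum>\<mu>\<in>{a, b, \<alpha>, \<beta>}. complex_of_real (t \<mu>) * Lgen \<mu> r c)"
    unfolding gen_comb_def using assms(1-4) by (intro sum.mono_neutral_right) (auto simp: t_def)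
  also have "\<dots> = complex_of_real ta * Lgen a r c + complex_of_real tb * Lgen b r c
                + complex_of_real t\<alpha> * Lgen \<alpha> r c + complex_of_real t\<beta> * Lgen \<beta> r c"
    using assms(5) by (simp add: t_def add.assoc)
  finally show "gen_comb t r c = \<dots>" .
qed

lemma exists_weyl_char_neq_1:
  assumes "a < 9" "\<alpha> < 9" "sympl \<alpha> a \<noteq> 0"
  obtains \<nu> where "\<nu> < 9" "weyl_char a \<nu> \<noteq> 1" "weyl_char \<alpha> \<nu> \<noteq> 1"
proof -
  define \<nu> where "\<nu> = 3 * ((a div 3 + \<alpha> div 3) mod 3) + (a mod 3 + \<alpha> mod 3) mod 3"
  have "sympl a \<nu> \<noteq> 0 \<and> sympl \<alpha> \<nu> \<noteq> 0"
    using less_9_cases[OF assms(1)] less_9_cases[OF assms(2)] assms(3)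
    unfolding \<nu>_def by (elim disjE) (simp_all add: sympl_def)
  moreover have "\<nu> < 9" unfolding \<nu>_def by simp
  ultimately show ?thesis by (intro that[of \<nu>]) (simp_all add: weyl_char_eq_1_iff)
qed

theorem proposition7:
  fixes a b \<alpha> \<beta> :: nat and ta tb t\<alpha> t\<beta> :: real
  assumes "a \<in> {1..8}" "b \<in> {1..8}" "\<alpha> \<in> {1..8}" "\<beta> \<in> {1..8}"
    and "distinct [a, b, \<alpha>, \<beta>]"
    and "\<exists>z. cmod z = 1 \<and> meq 3 (Weyl a) (\<lambda>i j. z * adj (Weyl b) i j)"
    and "\<exists>z. cmod z = 1 \<and> meq 3 (Weyl \<alpha>) (\<lambda>i j. z * adj (Weyl \<beta>) i j)"
    and "0 \<le> ta" "0 \<le> tb" "0 \<le> t\<alpha>" "0 \<le> t\<beta>"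
  shows "\<exists>p. meq 9 (weyl_channel p)
               (mexp 9 (\<lambda>r c. complex_of_real ta * Lgen a r c + complex_of_real tb * Lgen b r c
                             + complex_of_real t\<alpha> * Lgen \<alpha> r c + complex_of_real t\<beta> * Lgen \<beta> r c))
           \<and> p \<in> AQ3_boundary
           \<and> (\<exists>\<sigma> :: nat \<Rightarrow> nat \<times> nat. bij_betw \<sigma> {0..<9} ({1,2,3} \<times> {1,2,3})
                \<and> (\<forall>\<mu><9. p \<mu> = fprob (fst (\<sigma> \<mu>)) ta tb * fprob (snd (\<sigma> \<mu>)) t\<alpha> t\<beta>))"
proof -
  have lt: "a < 9" "b < 9" "\<alpha> < 9" "\<beta> < 9" using assms(1-4) by auto
  note conj_b = weyl_char_adjoint_pair[OF lt(1,2) assms(6)]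
  note conj_\<beta> = weyl_char_adjoint_pair[OF lt(3,4) assms(7)]
  have indep: "sympl \<alpha> a \<noteq> 0" using sympl_adjoint_pairs_neq_0[OF assms(1-3) _ _ conj_b] assms(5) by auto
  define p where "p = product_prob a \<alpha> ta tb t\<alpha> t\<beta>"
  define t where "t = (\<lambda>\<mu>. if \<mu> = a then ta else if \<mu> = b then tb else if \<mu> = \<alpha> then t\<alpha> else if \<mu> = \<beta> then t\<beta> else 0)"
  have channel: "meq 9 (weyl_channel p) (mexp 9 (gen_comb t))"
    unfolding p_def t_def gen_comb_four[OF assms(1-5)] by (rule product_prob_channel[OF lt indep conj_b conj_\<beta>])
  have "p \<in> AQ3" unfolding AQ3_def
    using product_prob_in_simplex[OF lt(1,3) indep assms(8-11)] channel assms(8-11)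
    by (auto simp: p_def t_def intro!: exI[of _ t])
  obtain \<nu>0 where \<nu>0: "\<nu>0 < 9" "weyl_char a \<nu>0 \<noteq> 1" "weyl_char \<alpha> \<nu>0 \<noteq> 1"
    using exists_weyl_char_neq_1[OF lt(1,3) indep] .
  then have "\<nu>0 \<noteq> 0" by (metis weyl_char_0_right)
  have "p \<in> AQ3_boundary"
    using \<nu>0 conj_b[OF \<nu>0(1)] conj_\<beta>[OF \<nu>0(1)]
    by (intro AQ3_boundaryI[OF \<open>p \<in> AQ3\<close> \<nu>0(1) \<open>\<nu>0 \<noteq> 0\<close>] prod_norm_chan_eigval_eq_power_6[OF channel \<nu>0(1)])
      (auto simp: t_def)
  then show ?thesis
    using channel bij_betw_Suc_coords[OF lt(1,3) indep] unfolding gen_comb_four[OF assms(1-5)] t_def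
    by (force simp: p_def product_prob_def)
qed

end
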